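(* Let $\bar\mu_0\ge0$ and $\lambda_j=L^{k-j}$. For every $f\in\mathcal L^2(\Omega)$ and $x\in\Omega$, $$(G_k(\Omega)f)(x)=\sum_{j=1}^{k-1}\lambda_j^{-2}\big(C'_j(\lambda_j\Omega)f_{\lambda_j}\big)(\lambda_jx)+\lambda_1^{-2}\big(G_1(\lambda_1\Omega)f_{\lambda_1}\big)(\lambda_1x),$$ where $f_\lambda(x')=f(\lambda^{-1}x')$ for $x'\in\lambda\Omega$.
   Context: Setup: $d\ge1$, odd integer $L>1$, integers $k\ge1$, $m\ge k$, $\eta=L^{-k}$, $\Omega=\eta\{0,\dots,L^m-1\}^d$, $\Omega_i=(L^i\eta)\{0,\dots,L^{m-i}-1\}^d$. Fix $a\in(0,1]$, $a_j=a\frac{1-L^{-2}}{1-L^{-2j}}$, $\bar\mu_j=L^{2j}\bar\mu_0$. For $1\le j\le k$ put $\lambda_j=L^{k-j}$ and $\Omega^{(j)}=\lambda_j\Omega=L^{-j}\{0,\dots,L^m-1\}^d$ (lattice spacing $L^{-j}$), with coarse lattices $\Omega^{(j)}_i=\lambda_j\Omega_i$ (so $\Omega^{(j)}_j\subset\mathbb Z^d$). On a lattice set $O$ of spacing $\epsilon$, $\mathcal L^2(O)$ carries the inner product $\epsilon^d\sum_{x\in O}\bar fg$. For $y\in(L^{i}\epsilon)\mathbb Z^d$, $B^\epsilon_i(y)=\{x\in\epsilon\mathbb Z^d: y_\mu\le x_\mu<y_\mu+L^i\epsilon\ \forall\mu\}$. Averaging $Q_{\Omega^{(j)},j}:\mathcal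 L^2(\Omega^{(j)})\to\mathcal L^2(\Omega^{(j)}_j)$, $(Qf)(y)=L^{-jd}\sum_{x\in B^{L^{-j}}_j(y)}f(x)$, with adjoint $(Q^*h)(x)=h(y_x)$; one-step averaging $Q_{\Omega^{(j)}_j}:\mathcal L^2(\Omega^{(j)}_j)\to\mathcal L^2(\Omega^{(j)}_{j+1})$, $(Q\psi)(y)=L^{-d}\sum_{y'\in\Omega^{(j)}_j,\ y_\mu\le y'_\mu<y_\mu+L}\psi(y')$. The Neumann Laplacian on a set $O\subset\epsilon\mathbb Z^d$ is $(\Delta^\epsilon_O f)(x)=\epsilon^{-2}\sum_\mu(f(x+\epsilon e_\mu)-2f(x)+f(x-\epsilon e_\mu))$ with $f(x\pm\epsilon e_\mu):=f(x)$ if $x\pm\epsilon e_\mu\notin O$. Define $G_j(\Omega^{(j)})=(-\Delta^{L^{-j}}_{\Omega^{(j)}}+\bar\mu_j+a_jQ^*_{\Omega^{(j)},j}Q_{\Omega^{(j)},j})^{-1}$ (for $j=k$ this is $G_k(\Omega)=(-\Delta^\eta_\Omega+\bar\mu_k+a_kQ_{\Omega,k}^*Q_{\Omega,k})^{-1}$), $\mathcal H_j=a_jG_j(\Omega^{(j)})Q^*_{\Omega^{(j)},j}$, $C_j(\Omega^{(j)})=\big(a_j-a_j^2Q_{\Omega^{(j)},j}G_j(\Omega^{(j)})Q^*_{\Omega^{(j)},j}+aL^{-2}Q^*_{\Omega^{(j)}_j}Q_{\Omega^{(j)}_j}\big)^{-1}$ on $\mathcal L^2(\Omega^{(j)}_j)$,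 and $C'_j(\Omega^{(j)})=\mathcal H_jC_j(\Omega^{(j)})\mathcal H_j^*$. *)

theory Defs
  imports "HOL-Analysis.Analysis"
begin

(* Points of the lattices are represented by their actual real coordinates in real^'d,
   d = CARD('d).  Elements of L^2(S) are functions real^'d => complex, of which only the
   values on S matter. *)

definition lat :: "real \<Rightarrow> nat \<Rightarrow> (real^'d) set" where
  "lat eps N = {x. \<forall>\<mu>. \<exists>n::nat. n < N \<and> x$\<mu> = eps * real n}"

definition Vsp :: "(real^'d) set \<Rightarrow> (real^'d \<Rightarrow> complex) set" where
  "Vsp S = {f. \<forall>x. x \<notin> S \<longrightarrow> f x = 0}"

definition ip :: "real \<Rightarrow> (real^'d) set \<Rightarrow> (real^'d \<Rightarrow> complex) \<Rightarrow> (real^'d \<Rightarrow> complex) \<Rightarrow> complex" where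
  "ip eps S f g = complex_of_real (eps ^ CARD('d)) * (\<Sum>x\<in>S. cnj (f x) * g x)"

definition box :: "real \<Rightarrow> real \<Rightarrow> real^'d \<Rightarrow> (real^'d) set" where
  "box eps s y = {x. (\<forall>\<mu>. \<exists>z::int. x$\<mu> = eps * of_int z) \<and>
                     (\<forall>\<mu>. y$\<mu> \<le> x$\<mu> \<and> x$\<mu> < y$\<mu> + s * eps)}"

definition avg :: "real \<Rightarrow> real \<Rightarrow> (real^'d) set \<Rightarrow> (real^'d \<Rightarrow> complex) \<Rightarrow> real^'d \<Rightarrow> complex" where
  "avg eps s S f y = complex_of_real (1 / s ^ CARD('d)) * (\<Sum>x\<in>box eps s y \<inter> S. f x)"

(* Neumann Laplacian on S with spacing eps *)
definition nlap :: "real \<Rightarrow> (real^'d) set \<Rightarrow> (real^'d \<Rightarrow> complex) \<Rightarrow> real^'d \<Rightarrow> complex" where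
  "nlap eps S f x = complex_of_real (1 / eps^2) *
     (\<Sum>\<mu>\<in>UNIV. (let nb = (\<lambda>z. if z \<in> S then f z else f x) in
        nb (x + eps *\<^sub>R axis \<mu> 1) - 2 * f x + nb (x - eps *\<^sub>R axis \<mu> 1)))"

definition opinv :: "(real^'d) set \<Rightarrow> ((real^'d \<Rightarrow> complex) \<Rightarrow> (real^'d \<Rightarrow> complex))
                     \<Rightarrow> (real^'d \<Rightarrow> complex) \<Rightarrow> (real^'d \<Rightarrow> complex)" where
  "opinv S A g = (THE h. h \<in> Vsp S \<and> (\<forall>x\<in>S. A h x = g x))"

definition adj :: "real \<Rightarrow> (real^'d) set \<Rightarrow> real \<Rightarrow> (real^'d) set
                   \<Rightarrow> ((real^'d \<Rightarrow> complex) \<Rightarrow> (real^'d \<Rightarrow> complex))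
                   \<Rightarrow> (real^'d \<Rightarrow> complex) \<Rightarrow> (real^'d \<Rightarrow> complex)" where
  "adj e1 S1 e2 S2 T g = (THE h. h \<in> Vsp S1 \<and> (\<forall>f\<in>Vsp S1. ip e2 S2 (T f) g = ip e1 S1 f h))"

definition aj :: "real \<Rightarrow> nat \<Rightarrow> nat \<Rightarrow> real" where
  "aj a L j = a * (1 - 1 / real L ^ 2) / (1 - 1 / real L ^ (2 * j))"

definition mubar :: "real \<Rightarrow> nat \<Rightarrow> nat \<Rightarrow> real" where
  "mubar mu0 L j = real L ^ (2 * j) * mu0"

(* Omega^(j) = L^{-j}{0..L^m-1}^d, Omega^(j)_j = {0..L^(m-j)-1}^d, Omega^(j)_{j+1} = L{0..L^(m-j-1)-1}^d *)
definition OmJ :: "nat \<Rightarrow> nat \<Rightarrow> nat \<Rightarrow> (real^'d) set" where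
  "OmJ L m j = lat (1 / real L ^ j) (L ^ m)"

definition OmJj :: "nat \<Rightarrow> nat \<Rightarrow> nat \<Rightarrow> (real^'d) set" where
  "OmJj L m j = lat 1 (L ^ (m - j))"

definition OmJj1 :: "nat \<Rightarrow> nat \<Rightarrow> nat \<Rightarrow> (real^'d) set" where
  "OmJj1 L m j = lat (real L) (L ^ (m - j - 1))"

definition QJ :: "nat \<Rightarrow> nat \<Rightarrow> nat \<Rightarrow> (real^'d \<Rightarrow> complex) \<Rightarrow> real^'d \<Rightarrow> complex" where
  "QJ L m j = avg (1 / real L ^ j) (real L ^ j) (OmJ L m j)"

definition QJs :: "nat \<Rightarrow> nat \<Rightarrow> nat \<Rightarrow> (real^'d \<Rightarrow> complex) \<Rightarrow> real^'d \<Rightarrow> complex" where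
  "QJs L m j = adj (1 / real L ^ j) (OmJ L m j) 1 (OmJj L m j) (QJ L m j)"

definition Q1 :: "nat \<Rightarrow> nat \<Rightarrow> nat \<Rightarrow> (real^'d \<Rightarrow> complex) \<Rightarrow> real^'d \<Rightarrow> complex" where
  "Q1 L m j = avg 1 (real L) (OmJj L m j)"

definition Q1s :: "nat \<Rightarrow> nat \<Rightarrow> nat \<Rightarrow> (real^'d \<Rightarrow> complex) \<Rightarrow> real^'d \<Rightarrow> complex" where
  "Q1s L m j = adj 1 (OmJj L m j) (real L) (OmJj1 L m j) (Q1 L m j)"

definition Gop :: "nat \<Rightarrow> nat \<Rightarrow> real \<Rightarrow> real \<Rightarrow> nat \<Rightarrow> (real^'d \<Rightarrow> complex) \<Rightarrow> real^'d \<Rightarrow> complex" where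
  "Gop L m a mu0 j = opinv (OmJ L m j)
     (\<lambda>f x. - nlap (1 / real L ^ j) (OmJ L m j) f x + complex_of_real (mubar mu0 L j) * f x
            + complex_of_real (aj a L j) * QJs L m j (QJ L m j f) x)"

definition Hop :: "nat \<Rightarrow> nat \<Rightarrow> real \<Rightarrow> real \<Rightarrow> nat \<Rightarrow> (real^'d \<Rightarrow> complex) \<Rightarrow> real^'d \<Rightarrow> complex" where
  "Hop L m a mu0 j \<psi> = (\<lambda>x. complex_of_real (aj a L j) * Gop L m a mu0 j (QJs L m j \<psi>) x)"

definition Hs :: "nat \<Rightarrow> nat \<Rightarrow> real \<Rightarrow> real \<Rightarrow> nat \<Rightarrow> (real^'d \<Rightarrow> complex) \<Rightarrow> real^'d \<Rightarrow> complex" where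
  "Hs L m a mu0 j = adj 1 (OmJj L m j) (1 / real L ^ j) (OmJ L m j) (Hop L m a mu0 j)"

definition Cop :: "nat \<Rightarrow> nat \<Rightarrow> real \<Rightarrow> real \<Rightarrow> nat \<Rightarrow> (real^'d \<Rightarrow> complex) \<Rightarrow> real^'d \<Rightarrow> complex" where
  "Cop L m a mu0 j = opinv (OmJj L m j)
     (\<lambda>\<psi> y. complex_of_real (aj a L j) * \<psi> y
            - complex_of_real ((aj a L j)^2) * QJ L m j (Gop L m a mu0 j (QJs L m j \<psi>)) y
            + complex_of_real (a / real L ^ 2) * Q1s L m j (Q1 L m j \<psi>) y)"

definition Cp :: "nat \<Rightarrow> nat \<Rightarrow> real \<Rightarrow> real \<Rightarrow> nat \<Rightarrow> (real^'d \<Rightarrow> complex) \<Rightarrow> real^'d \<Rightarrow> complex" where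
  "Cp L m a mu0 j f = Hop L m a mu0 j (Cop L m a mu0 j (Hs L m a mu0 j f))"

definition rescale :: "real \<Rightarrow> (real^'d \<Rightarrow> complex) \<Rightarrow> real^'d \<Rightarrow> complex" where
  "rescale lam f = (\<lambda>x'. f (inverse lam *\<^sub>R x'))"

end

theory Submission
  imports Defs "HOL-Library.Function_Algebras"
begin

text \<open>
  The operator \<open>-\<Delta> + \<mu>\<^sub>j + a\<^sub>j Q\<^sup>*Q\<close> defining \<open>G\<^sub>j\<close> is positive definite on the finite lattice
  (summation by parts, and a function with vanishing differences along all bonds is constant), and so
  is \<open>a\<^sub>j - a\<^sub>j\<^sup>2 Q G\<^sub>j Q\<^sup>* + a L\<^sup>-\<^sup>2 Q\<^sub>1\<^sup>*Q\<^sub>1\<close> defining \<open>C\<^sub>j\<close>; hence all operators in the statement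
  are well defined. The core is the one-step identity
  \<open>G\<^sub>j\<^sub>+\<^sub>1 f = L\<^sup>-\<^sup>2 (G\<^sub>j f\<^sub>L + C'\<^sub>j f\<^sub>L)(L \<cdot>)\<close>. A Schur-complement computation shows that
  \<open>\<phi> = G\<^sub>j g + C'\<^sub>j g\<close> solves \<open>(-\<Delta> + \<mu>\<^sub>j + a\<^sub>j\<^sub>+\<^sub>1 L\<^sup>-\<^sup>2 Q\<^sup>*Q\<^sub>1\<^sup>*Q\<^sub>1Q) \<phi> = g\<close>, the coefficient coming
  from \<open>a\<^sub>j\<^sub>+\<^sub>1 (a\<^sub>j + a L\<^sup>-\<^sup>2) = a a\<^sub>j\<close>. Rescaling by \<open>L\<close> turns this operator into \<open>L\<^sup>2\<close> times the one
  defining \<open>G\<^sub>j\<^sub>+\<^sub>1\<close>, since averaging over blocks of side \<open>L\<^sup>j\<close> and then over blocks of \<open>L\<close> of those is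
  averaging over blocks of side \<open>L\<^sup>j\<^sup>+\<^sup>1\<close>. Iterating the identity from \<open>k\<close> down to \<open>1\<close> gives the formula.
\<close>

subsection \<open>Solvability of injective linear equations on a finite lattice\<close>

lemma (in vector_space) span_subset_image_if_inj_on_span:
  assumes fin: "finite B" and ind: "independent B" and hom: "module_hom scale scale F"
    and into: "F ` span B \<subseteq> span B" and inj: "inj_on F (span B)"
  shows "span B \<subseteq> F ` span B"
proof
  fix g assume g: "g \<in> span B"
  have indF: "independent (F ` B)"
    using module_hom.independent_injective_image[OF hom ind inj] .
  have cardF: "card (F ` B) = card B"
    using inj span_superset by (intro card_image) (auto intro: inj_on_subset)
  have "g \<in> span (F ` B)"
  proof (rule ccontr)
    assume ng: "g \<notin> span (F ` B)"
    have "independent (insert g (F ` B))" using independent_insertI[OF ng indF] .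
    moreover have "insert g (F ` B) \<subseteq> span B" using g into span_superset by auto
    ultimately have "card (insert g (F ` B)) \<le> card B"
      using independent_span_bound[OF fin] by blast
    moreover have "g \<notin> F ` B" using ng span_base by blast
    ultimately show False using fin cardF by simp
  qed
  then show "g \<in> F ` span B" using module_hom.span_image[OF hom] by simp
qed

definition fun_scale :: "complex \<Rightarrow> ('b \<Rightarrow> complex) \<Rightarrow> 'b \<Rightarrow> complex" where
  "fun_scale c f = (\<lambda>x. c * f x)"

lemma vector_space_fun_scale: "vector_space fun_scale"
  by unfold_locales (auto simp: fun_scale_def fun_eq_iff algebra_simps)

lemma module_fun_scale: "module fun_scale"
  using vector_space_fun_scale by (simp add: module_iff_vector_space)

lemma sum_fun_apply: "sum f A z = (\<Sum>x\<in>A. f x z)" for f :: "'a \<Rightarrow> 'b \<Rightarrow> 'c::comm_monoid_add"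
  by (induction A rule: infinite_finite_induct) auto

lemma Vsp_eq_span_indicators:
  assumes fin: "finite S"
  shows "module.span fun_scale ((\<lambda>x z. if z = x then 1 else 0) ` S) = Vsp S"
    (is "module.span fun_scale (?\<delta> ` S) = _")
proof
  show "module.span fun_scale (?\<delta> ` S) \<subseteq> Vsp S"
    by (rule module.span_minimal[OF module_fun_scale])
       (auto simp: module.subspace_def[OF module_fun_scale] Vsp_def fun_scale_def)
next
  show "Vsp S \<subseteq> module.span fun_scale (?\<delta> ` S)"
  proof
    fix u assume u: "u \<in> Vsp S"
    have "u z = (\<Sum>x\<in>S. fun_scale (u x) (?\<delta> x)) z" for z
    proof -
      have "(\<Sum>x\<in>S. fun_scale (u x) (?\<delta> x)) z = (\<Sum>x\<in>S. if x = z then u z else 0)"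
        by (simp add: fun_scale_def sum_fun_apply) (rule sum.cong, auto)
      also have "\<dots> = u z" using u fin by (simp add: Vsp_def)
      finally show ?thesis by simp
    qed
    then have "u = (\<Sum>x\<in>S. fun_scale (u x) (?\<delta> x))" by blast
    also have "\<dots> \<in> module.span fun_scale (?\<delta> ` S)"
      by (intro module.span_sum[OF module_fun_scale] module.span_scale[OF module_fun_scale]
          module.span_base[OF module_fun_scale]) auto
    finally show "u \<in> module.span fun_scale (?\<delta> ` S)" .
  qed
qed

lemma independent_indicators:
  "\<not> module.dependent fun_scale ((\<lambda>x z. if z = x then (1::complex) else 0) ` S)"
  unfolding module.independent_explicit_module[OF module_fun_scale]
proof (intro allI impI)
  fix t c v
  assume t: "finite t" "t \<subseteq> (\<lambda>x z. if z = x then 1 else 0) ` S"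
    and s: "(\<Sum>v\<in>t. fun_scale (c v) v) = 0" and v: "v \<in> t"
  then obtain x where x: "v = (\<lambda>z. if z = x then 1 else 0)" by auto
  have "0 = (\<Sum>w\<in>t. c w * w x)" using s by (simp add: fun_scale_def sum_fun_apply fun_eq_iff)
  also have "\<dots> = c v * v x + (\<Sum>w\<in>t - {v}. c w * w x)" using t v by (simp add: sum.remove)
  also have "(\<Sum>w\<in>t - {v}. c w * w x) = 0"
  proof (rule sum.neutral, rule ballI)
    fix w assume w: "w \<in> t - {v}"
    then obtain x' where "w = (\<lambda>z. if z = x' then 1 else 0)" using t by auto
    with w x show "c w * w x = 0" by auto
  qed
  finally show "c v = 0" by (simp add: x)
qed

definition linear_on_Vsp :: "(real^'d) set \<Rightarrow> ((real^'d \<Rightarrow> complex) \<Rightarrow> real^'d \<Rightarrow> complex) \<Rightarrow> bool" where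
  "linear_on_Vsp S A \<longleftrightarrow>
     (\<forall>u v y. u \<in> Vsp S \<longrightarrow> v \<in> Vsp S \<longrightarrow> y \<in> S \<longrightarrow> A (\<lambda>z. u z + v z) y = A u y + A v y) \<and>
     (\<forall>c u y. u \<in> Vsp S \<longrightarrow> y \<in> S \<longrightarrow> A (\<lambda>z. c * u z) y = c * A u y)"

definition inj_on_Vsp :: "(real^'d) set \<Rightarrow> ((real^'d \<Rightarrow> complex) \<Rightarrow> real^'d \<Rightarrow> complex) \<Rightarrow> bool" where
  "inj_on_Vsp S A \<longleftrightarrow> (\<forall>u\<in>Vsp S. (\<forall>y\<in>S. A u y = 0) \<longrightarrow> u = (\<lambda>_. 0))"

lemma linear_on_Vsp_diff:
  assumes lin: "linear_on_Vsp S A" and u: "u \<in> Vsp S" and v: "v \<in> Vsp S" and y: "y \<in> S"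
  shows "A (\<lambda>z. u z - v z) y = A u y - A v y"
proof -
  have mv: "(\<lambda>z. (-1) * v z) \<in> Vsp S" using v by (auto simp: Vsp_def)
  have "A (\<lambda>z. u z + (-1) * v z) y = A u y + A (\<lambda>z. (-1) * v z) y"
    using lin[unfolded linear_on_Vsp_def, THEN conjunct1, rule_format, OF u mv y] .
  also have "A (\<lambda>z. (-1) * v z) y = (-1) * A v y"
    using lin[unfolded linear_on_Vsp_def, THEN conjunct2, rule_format, OF v y] .
  finally show ?thesis by simp
qed

text \<open>\<open>F = R \<circ> A \<circ> R\<close>, with \<open>R\<close> the restriction to \<open>S\<close>, is a linear endomorphism of the whole
  function space that agrees with \<open>A\<close> on \<open>Vsp S\<close>; being injective on the finite-dimensional
  \<open>Vsp S\<close>, it maps it onto itself.\<close>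

lemma Vsp_solution_exists:
  fixes S :: "(real^'d) set"
  assumes fin: "finite S" and lin: "linear_on_Vsp S A" and inj: "inj_on_Vsp S A"
  shows "\<exists>h\<in>Vsp S. \<forall>y\<in>S. A h y = g y"
proof -
  define R where "R u = (\<lambda>z. if z \<in> S then u z else 0)" for u :: "real^'d \<Rightarrow> complex"
  define F where "F u = R (A (R u))" for u
  define B where "B = (\<lambda>x z. if z = x then (1::complex) else 0) ` S"
  have R_Vsp: "R u \<in> Vsp S" for u by (auto simp: R_def Vsp_def)
  have R_id: "u \<in> Vsp S \<Longrightarrow> R u = u" for u by (auto simp: R_def Vsp_def fun_eq_iff)
  have span_B: "module.span fun_scale B = Vsp S"
    unfolding B_def by (rule Vsp_eq_span_indicators[OF fin])
  have "F (u + v) = F u + F v" for u v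
  proof -
    have "R (u + v) = (\<lambda>z. R u z + R v z)" by (auto simp: R_def fun_eq_iff)
    then show ?thesis using lin R_Vsp by (auto simp: linear_on_Vsp_def F_def R_def fun_eq_iff)
  qed
  moreover have "F (fun_scale c u) = fun_scale c (F u)" for c u
  proof -
    have "R (fun_scale c u) = (\<lambda>z. c * R u z)" by (auto simp: R_def fun_scale_def fun_eq_iff)
    then show ?thesis using lin R_Vsp by (auto simp: linear_on_Vsp_def F_def R_def fun_scale_def fun_eq_iff)
  qed
  ultimately have "module_hom fun_scale fun_scale F"
    unfolding module_hom_def module_hom_axioms_def using module_fun_scale by blast
  moreover have "inj_on F (Vsp S)"
  proof (rule inj_onI)
    fix u v assume u: "u \<in> Vsp S" and v: "v \<in> Vsp S" and "F u = F v"
    then have RA: "R (A u) = R (A v)" unfolding F_def R_id[OF u] R_id[OF v] by blast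
    have "A u y = A v y" if "y \<in> S" for y using fun_cong[OF RA, of y] that by (simp add: R_def)
    then have "\<forall>y\<in>S. A (\<lambda>z. u z - v z) y = 0" using linear_on_Vsp_diff[OF lin u v] by simp
    moreover have "(\<lambda>z. u z - v z) \<in> Vsp S" using u v by (auto simp: Vsp_def)
    ultimately show "u = v" using inj by (auto simp: inj_on_Vsp_def fun_eq_iff)
  qed
  moreover have "F ` Vsp S \<subseteq> Vsp S" by (auto simp: F_def R_Vsp)
  moreover have "finite B" "\<not> module.dependent fun_scale B"
    using fin independent_indicators by (auto simp: B_def)
  ultimately have "Vsp S \<subseteq> F ` Vsp S"
    using vector_space.span_subset_image_if_inj_on_span[OF vector_space_fun_scale, of B F]
    by (simp add: span_B)
  moreover have "R g \<in> Vsp S" by (rule R_Vsp)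
  ultimately obtain h where h: "h \<in> Vsp S" "F h = R g" by auto
  then have RA: "R (A h) = R g" unfolding F_def R_id[OF h(1)] by blast
  have "A h y = g y" if "y \<in> S" for y using fun_cong[OF RA, of y] that by (simp add: R_def)
  with h(1) show ?thesis by blast
qed

lemma opinv_eqI:
  assumes lin: "linear_on_Vsp S A" and inj: "inj_on_Vsp S A"
    and h: "h \<in> Vsp S" and eq: "\<And>y. y \<in> S \<Longrightarrow> A h y = g y"
  shows "opinv S A g = h"
  unfolding opinv_def
proof (rule the_equality)
  show "h \<in> Vsp S \<and> (\<forall>x\<in>S. A h x = g x)" using h eq by auto
next
  fix h' assume h': "h' \<in> Vsp S \<and> (\<forall>x\<in>S. A h' x = g x)"
  then have "\<forall>y\<in>S. A (\<lambda>z. h' z - h z) y = 0"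
    using linear_on_Vsp_diff[OF lin _ h] eq by auto
  moreover have "(\<lambda>z. h' z - h z) \<in> Vsp S" using h h' by (auto simp: Vsp_def)
  ultimately show "h' = h" using inj by (auto simp: inj_on_Vsp_def fun_eq_iff)
qed

lemma opinv_solves:
  assumes "finite S" and "linear_on_Vsp S A" and "inj_on_Vsp S A"
  shows "opinv S A g \<in> Vsp S" and "\<And>y. y \<in> S \<Longrightarrow> A (opinv S A g) y = g y"
proof -
  obtain h where "h \<in> Vsp S" "\<forall>y\<in>S. A h y = g y" using Vsp_solution_exists[OF assms] by blast
  moreover from this have "opinv S A g = h" using assms by (intro opinv_eqI) auto
  ultimately show "opinv S A g \<in> Vsp S" "\<And>y. y \<in> S \<Longrightarrow> A (opinv S A g) y = g y" by auto
qed

lemma cnj_ip: "cnj (ip e S f g) = ip e S g f"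
  by (simp add: ip_def mult.commute)

lemma ip_self: "ip e S f f = complex_of_real (e ^ CARD('d) * (\<Sum>x\<in>S. (cmod (f x))\<^sup>2))"
  for f :: "real^'d \<Rightarrow> complex"
proof -
  have "(\<Sum>x\<in>S. cnj (f x) * f x) = complex_of_real (\<Sum>x\<in>S. (cmod (f x))\<^sup>2)"
    unfolding of_real_sum by (rule sum.cong) (simp_all only: complex_norm_square mult.commute)
  then show ?thesis by (simp add: ip_def)
qed

lemma ip_self_eq_0_imp:
  fixes f :: "real^'d \<Rightarrow> complex"
  assumes "e > 0" "finite S" "ip e S f f = 0" "x \<in> S"
  shows "f x = 0"
proof -
  have "e ^ CARD('d) * (\<Sum>x\<in>S. (cmod (f x))\<^sup>2) = 0"
    using assms(3) unfolding ip_self of_real_eq_0_iff .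
  then have "(\<Sum>x\<in>S. (cmod (f x))\<^sup>2) = 0" using assms(1) by simp
  then show ?thesis using assms(2,4) by (simp add: sum_nonneg_eq_0_iff)
qed

lemma ip_cong:
  "(\<And>x. x \<in> S \<Longrightarrow> f x = f' x) \<Longrightarrow> (\<And>x. x \<in> S \<Longrightarrow> g x = g' x) \<Longrightarrow> ip e S f g = ip e S f' g'"
  by (simp add: ip_def)

lemma ip_add_right: "ip e S u (\<lambda>x. f x + g x) = ip e S u f + ip e S u g"
  by (simp add: ip_def distrib_left sum.distrib)

lemma ip_scale_right: "ip e S u (\<lambda>x. c * f x) = c * ip e S u f"
  by (simp add: ip_def sum_distrib_left mult.left_commute)

lemma ip_scale_left: "ip e S (\<lambda>x. c * f x) w = cnj c * ip e S f w"
  by (simp add: ip_def sum_distrib_left mult.left_commute mult.assoc)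

lemma adj_eqI:
  fixes T :: "(real^'d \<Rightarrow> complex) \<Rightarrow> real^'d \<Rightarrow> complex"
  assumes e1: "e1 > 0" and fin: "finite S1" and h: "h \<in> Vsp S1"
    and eq: "\<And>f. f \<in> Vsp S1 \<Longrightarrow> ip e2 S2 (T f) g = ip e1 S1 f h"
  shows "adj e1 S1 e2 S2 T g = h"
  unfolding adj_def
proof (rule the_equality)
  show "h \<in> Vsp S1 \<and> (\<forall>f\<in>Vsp S1. ip e2 S2 (T f) g = ip e1 S1 f h)" using h eq by auto
next
  fix h' assume h': "h' \<in> Vsp S1 \<and> (\<forall>f\<in>Vsp S1. ip e2 S2 (T f) g = ip e1 S1 f h')"
  define w where "w = (\<lambda>x. h' x - h x)"
  have wV: "w \<in> Vsp S1" using h h' by (auto simp: Vsp_def w_def)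
  have "ip e1 S1 w h' = ip e1 S1 w h" using h' eq[OF wV] wV by auto
  moreover have "ip e1 S1 w w = ip e1 S1 w h' - ip e1 S1 w h"
    by (simp add: ip_def w_def right_diff_distrib sum_subtractf)
  ultimately have "ip e1 S1 w w = 0" by simp
  then have "w x = 0" if "x \<in> S1" for x by (rule ip_self_eq_0_imp[OF e1 fin _ that])
  then have "h' x = h x" for x using h h' by (cases "x \<in> S1") (auto simp: w_def Vsp_def)
  then show "h' = h" ..
qed

lemma ip_fibre_average:
  fixes Q :: "(real^'d \<Rightarrow> complex) \<Rightarrow> real^'d \<Rightarrow> complex" and p :: "real^'d \<Rightarrow> real^'d"
  assumes finS: "finite S" and finT: "finite T" and pST: "p ` S \<subseteq> T"
    and Q: "\<And>f y. y \<in> T \<Longrightarrow> Q f y = complex_of_real c * (\<Sum>z\<in>{z\<in>S. p z = y}. f z)"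
    and c: "eT ^ CARD('d) * c = eS ^ CARD('d)"
  shows "ip eT T (Q f) g = ip eS S f (\<lambda>x. if x \<in> S then g (p x) else 0)"
proof -
  have "ip eT T (Q f) g = complex_of_real (eT ^ CARD('d)) *
      (\<Sum>y\<in>T. cnj (complex_of_real c * (\<Sum>z\<in>{z\<in>S. p z = y}. f z)) * g y)"
    unfolding ip_def using Q by (intro arg_cong2[where f="(*)"] sum.cong) auto
  also have "(\<Sum>y\<in>T. cnj (complex_of_real c * (\<Sum>z\<in>{z\<in>S. p z = y}. f z)) * g y)
      = complex_of_real c * (\<Sum>y\<in>T. \<Sum>z\<in>{z\<in>S. p z = y}. cnj (f z) * g (p z))"
    by (simp add: sum_distrib_left sum_distrib_right mult.assoc)
  also have "(\<Sum>y\<in>T. \<Sum>z\<in>{z\<in>S. p z = y}. cnj (f z) * g (p z)) = (\<Sum>z\<in>S. cnj (f z) * g (p z))"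
    by (rule sum.group[OF finS finT pST])
  also have "complex_of_real (eT ^ CARD('d)) * (complex_of_real c * \<dots>) =
      complex_of_real (eS ^ CARD('d)) * (\<Sum>z\<in>S. cnj (f z) * g (p z))"
    using c by (simp only: mult.assoc[symmetric] of_real_mult[symmetric])
  also have "\<dots> = ip eS S f (\<lambda>x. if x \<in> S then g (p x) else 0)"
    unfolding ip_def by (intro arg_cong2[where f="(*)"] sum.cong) auto
  finally show ?thesis .
qed

lemma adj_fibre_average:
  fixes Q :: "(real^'d \<Rightarrow> complex) \<Rightarrow> real^'d \<Rightarrow> complex" and p :: "real^'d \<Rightarrow> real^'d"
  assumes "eS > 0" and "finite S" and "finite T" and "p ` S \<subseteq> T"
    and "\<And>f y. y \<in> T \<Longrightarrow> Q f y = complex_of_real c * (\<Sum>z\<in>{z\<in>S. p z = y}. f z)"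
    and "eT ^ CARD('d) * c = eS ^ CARD('d)"
  shows "adj eS S eT T Q g = (\<lambda>x. if x \<in> S then g (p x) else 0)"
  using assms by (intro adj_eqI) (auto simp: Vsp_def intro!: ip_fibre_average)

lemma avg_add: "avg e s S (\<lambda>z. u z + v z) y = avg e s S u y + avg e s S v y"
  by (simp add: avg_def sum.distrib distrib_left)

lemma avg_scale: "avg e s S (\<lambda>z. c * u z) y = c * avg e s S u y"
  by (simp add: avg_def sum_distrib_left mult.left_commute)

lemma avg_cong: "(\<And>z. z \<in> S \<Longrightarrow> u z = v z) \<Longrightarrow> avg e s S u y = avg e s S v y"
  by (simp add: avg_def)

subsection \<open>Summation by parts for the Neumann Laplacian\<close>

lemma nlap_add: "nlap e S (\<lambda>z. u z + v z) x = nlap e S u x + nlap e S v x"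
  unfolding nlap_def Let_def distrib_left[symmetric] sum.distrib[symmetric]
  by (intro arg_cong2[where f="(*)"] sum.cong) auto

lemma nlap_scale: "nlap e S (\<lambda>z. c * u z) x = c * nlap e S u x"
  unfolding nlap_def Let_def mult.left_commute[of c] sum_distrib_left
  by (intro arg_cong2[where f="(*)"] sum.cong) (auto simp: algebra_simps)

definition dirichlet_form ::
    "real \<Rightarrow> (real^'d) set \<Rightarrow> (real^'d \<Rightarrow> complex) \<Rightarrow> (real^'d \<Rightarrow> complex) \<Rightarrow> complex" where
  "dirichlet_form e S u v = (\<Sum>\<mu>\<in>UNIV. \<Sum>w\<in>{w\<in>S. w + e *\<^sub>R axis \<mu> 1 \<in> S}.
      cnj (u (w + e *\<^sub>R axis \<mu> 1) - u w) * (v (w + e *\<^sub>R axis \<mu> 1) - v w))"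

lemma sum_by_parts_neumann:
  fixes E :: "real^'d"
  assumes fin: "finite S"
  shows "(\<Sum>x\<in>S. cnj (u x) * ((v x - (if x + E \<in> S then v (x + E) else v x))
                               + (v x - (if x - E \<in> S then v (x - E) else v x))))
       = (\<Sum>w\<in>{w\<in>S. w + E \<in> S}. cnj (u (w + E) - u w) * (v (w + E) - v w))"
proof -
  have forward: "(\<Sum>x\<in>S. cnj (u x) * (v x - (if x + E \<in> S then v (x + E) else v x)))
      = (\<Sum>w\<in>{w\<in>S. w + E \<in> S}. cnj (u w) * (v w - v (w + E)))"
    using fin by (simp add: sum.inter_filter) (rule sum.cong, auto)
  have "(\<Sum>x\<in>S. cnj (u x) * (v x - (if x - E \<in> S then v (x - E) else v x)))
      = (\<Sum>x\<in>{x\<in>S. x - E \<in> S}. cnj (u x) * (v x - v (x - E)))"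
    using fin by (simp add: sum.inter_filter) (rule sum.cong, auto)
  also have "\<dots> = (\<Sum>w\<in>{w\<in>S. w + E \<in> S}. cnj (u (w + E)) * (v (w + E) - v w))"
    by (rule sum.reindex_bij_witness[of _ "\<lambda>w. w + E" "\<lambda>x. x - E"]) auto
  finally have backward: "(\<Sum>x\<in>S. cnj (u x) * (v x - (if x - E \<in> S then v (x - E) else v x)))
      = (\<Sum>w\<in>{w\<in>S. w + E \<in> S}. cnj (u (w + E)) * (v (w + E) - v w))" .
  have "(\<Sum>x\<in>S. cnj (u x) * ((v x - (if x + E \<in> S then v (x + E) else v x))
                               + (v x - (if x - E \<in> S then v (x - E) else v x))))
     = (\<Sum>w\<in>{w\<in>S. w + E \<in> S}. cnj (u w) * (v w - v (w + E)) + cnj (u (w + E)) * (v (w + E) - v w))"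
    by (simp only: distrib_left sum.distrib forward backward)
  also have "\<dots> = (\<Sum>w\<in>{w\<in>S. w + E \<in> S}. cnj (u (w + E) - u w) * (v (w + E) - v w))"
    by (rule sum.cong) (auto simp: algebra_simps)
  finally show ?thesis .
qed

lemma neg_nlap_eq:
  "- nlap e S v x = complex_of_real (1 / e\<^sup>2) * (\<Sum>\<mu>\<in>UNIV.
     (v x - (if x + e *\<^sub>R axis \<mu> 1 \<in> S then v (x + e *\<^sub>R axis \<mu> 1) else v x)) +
     (v x - (if x - e *\<^sub>R axis \<mu> 1 \<in> S then v (x - e *\<^sub>R axis \<mu> 1) else v x)))"
  unfolding nlap_def Let_def mult_minus_right[symmetric] sum_negf[symmetric]
  by (intro arg_cong2[where f="(*)"] sum.cong) (auto simp: algebra_simps)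

lemma ip_neg_nlap:
  fixes u v :: "real^'d \<Rightarrow> complex"
  assumes "finite S"
  shows "ip e S u (\<lambda>x. - nlap e S v x) =
    complex_of_real (e ^ CARD('d)) * (complex_of_real (1 / e\<^sup>2) * dirichlet_form e S u v)"
proof -
  let ?D = "\<lambda>x \<mu>. (v x - (if x + e *\<^sub>R axis \<mu> 1 \<in> S then v (x + e *\<^sub>R axis \<mu> 1) else v x)) +
     (v x - (if x - e *\<^sub>R axis \<mu> 1 \<in> S then v (x - e *\<^sub>R axis \<mu> 1) else v x))"
  have "ip e S u (\<lambda>x. - nlap e S v x) = complex_of_real (e ^ CARD('d)) *
      (\<Sum>x\<in>S. cnj (u x) * (complex_of_real (1 / e\<^sup>2) * (\<Sum>\<mu>\<in>UNIV. ?D x \<mu>)))"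
    unfolding ip_def neg_nlap_eq ..
  also have "(\<Sum>x\<in>S. cnj (u x) * (complex_of_real (1 / e\<^sup>2) * (\<Sum>\<mu>\<in>UNIV. ?D x \<mu>)))
      = complex_of_real (1 / e\<^sup>2) * (\<Sum>\<mu>\<in>UNIV. \<Sum>x\<in>S. cnj (u x) * ?D x \<mu>)"
    by (simp only: sum_distrib_left sum.swap[of _ S] mult.left_commute)
  also have "(\<Sum>\<mu>\<in>UNIV. \<Sum>x\<in>S. cnj (u x) * ?D x \<mu>) = dirichlet_form e S u v"
    unfolding dirichlet_form_def sum_by_parts_neumann[OF assms] ..
  finally show ?thesis .
qed

lemma cnj_dirichlet_form: "cnj (dirichlet_form e S v u) = dirichlet_form e S u v"
  unfolding dirichlet_form_def by (simp add: mult.commute)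

lemma dirichlet_form_self:
  "dirichlet_form e S u u = complex_of_real (\<Sum>\<mu>\<in>UNIV. \<Sum>w\<in>{w\<in>S. w + e *\<^sub>R axis \<mu> 1 \<in> S}.
      (cmod (u (w + e *\<^sub>R axis \<mu> 1) - u w))\<^sup>2)"
  unfolding dirichlet_form_def of_real_sum
  by (intro sum.cong refl) (simp_all only: complex_norm_square mult.commute)

subsection \<open>Geometry of the lattices\<close>

definition vec_floor :: "real^'d \<Rightarrow> real^'d" where
  "vec_floor x = (\<chi> \<mu>. of_int \<lfloor>x$\<mu>\<rfloor>)"

definition block_corner :: "nat \<Rightarrow> real^'d \<Rightarrow> real^'d" where
  "block_corner L y = real L *\<^sub>R vec_floor (inverse (real L) *\<^sub>R y)"

definition lat_point :: "real \<Rightarrow> ('d \<Rightarrow> nat) \<Rightarrow> real^'d" where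
  "lat_point e n = (\<chi> \<mu>. e * real (n \<mu>))"

lemma mem_lat_iff: "x \<in> lat e N \<longleftrightarrow> (\<exists>n. (\<forall>\<mu>. n \<mu> < N) \<and> x = lat_point e n)"
proof
  assume "x \<in> lat e N"
  then have "\<forall>\<mu>. \<exists>n. n < N \<and> x$\<mu> = e * real n" by (simp add: lat_def)
  then obtain n where "\<forall>\<mu>. n \<mu> < N \<and> x$\<mu> = e * real (n \<mu>)" by metis
  then show "\<exists>n. (\<forall>\<mu>. n \<mu> < N) \<and> x = lat_point e n" by (auto simp: lat_point_def vec_eq_iff)
next
  assume "\<exists>n. (\<forall>\<mu>. n \<mu> < N) \<and> x = lat_point e n"
  then show "x \<in> lat e N" by (auto simp: lat_point_def lat_def)
qed

lemma finite_lat: "finite (lat e N :: (real^'d) set)"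
proof -
  have "lat e N \<subseteq> lat_point e ` (Pi\<^sub>E UNIV (\<lambda>_. {..<N}))"
  proof
    fix x assume "x \<in> lat e N"
    then obtain n where n: "\<forall>\<mu>. n \<mu> < N" "x = lat_point e n" by (auto simp: mem_lat_iff)
    then have "n \<in> Pi\<^sub>E UNIV (\<lambda>_. {..<N})" by (simp add: PiE_iff)
    then show "x \<in> lat_point e ` (Pi\<^sub>E UNIV (\<lambda>_. {..<N}))" using n by blast
  qed
  moreover have "finite (lat_point e ` (Pi\<^sub>E (UNIV::'d set) (\<lambda>_. {..<N})))"
    by (intro finite_imageI finite_PiE) auto
  ultimately show ?thesis by (rule finite_subset)
qed

lemma zero_in_lat: "N > 0 \<Longrightarrow> 0 \<in> lat e N"
  by (auto simp: lat_def intro: exI[of _ 0])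

lemma lat_point_decrement:
  assumes "n \<mu> > 0"
  shows "lat_point e n = lat_point e (n(\<mu> := n \<mu> - 1)) + e *\<^sub>R axis \<mu> 1"
proof -
  have "e * real (n \<mu>) = e * real (n \<mu> - 1) + e" using assms by (simp add: algebra_simps)
  then show ?thesis by (simp add: lat_point_def vec_eq_iff axis_def)
qed

lemma lat_const_if_bonds_const:
  fixes u :: "real^'d \<Rightarrow> complex"
  assumes bond: "\<And>w \<mu>. w \<in> lat e N \<Longrightarrow> w + e *\<^sub>R axis \<mu> 1 \<in> lat e N \<Longrightarrow> u (w + e *\<^sub>R axis \<mu> 1) = u w"
    and x: "x \<in> lat e N"
  shows "u x = u 0"
proof -
  have "u (lat_point e n) = u 0" if "\<forall>\<mu>. n \<mu> < N" for n
    using that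
  proof (induction "\<Sum>\<mu>\<in>UNIV. n \<mu>" arbitrary: n rule: less_induct)
    case less
    show ?case
    proof (cases "\<exists>\<mu>. n \<mu> > 0")
      case False
      then have "lat_point e n = 0" by (simp add: lat_point_def vec_eq_iff)
      then show ?thesis by simp
    next
      case True
      then obtain \<mu> where \<mu>: "n \<mu> > 0" by blast
      define n' where "n' = n(\<mu> := n \<mu> - 1)"
      have dec: "lat_point e n = lat_point e n' + e *\<^sub>R axis \<mu> 1"
        unfolding n'_def using \<mu> by (rule lat_point_decrement)
      have n'N: "\<forall>\<nu>. n' \<nu> < N" using less.prems by (simp add: n'_def less_imp_diff_less)
      have "(\<Sum>\<nu>\<in>UNIV. n' \<nu>) < (\<Sum>\<nu>\<in>UNIV. n \<nu>)"
        unfolding n'_def using \<mu> by (intro sum_strict_mono_ex1) auto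
      then have "u (lat_point e n') = u 0" using less.hyps n'N by blast
      moreover have "u (lat_point e n' + e *\<^sub>R axis \<mu> 1) = u (lat_point e n')"
        using less.prems n'N dec[symmetric] by (intro bond) (auto simp: mem_lat_iff)
      ultimately show ?thesis using dec by simp
    qed
  qed
  with x show ?thesis by (auto simp: mem_lat_iff)
qed

lemma nat_div_eq_iff: "(0::nat) < L \<Longrightarrow> k div L = p \<longleftrightarrow> L * p \<le> k \<and> k < L * p + L"
  by (metis add.commute div_nat_eqI dividend_less_times_div mult_Suc_right times_div_less_eq_dividend)

locale lattice_scale =
  fixes L :: nat
  assumes L_gt_1: "L > 1"
begin

lemma L_pos: "real L > 0" using L_gt_1 by simp

lemma L_pow_pos: "0 < real L ^ j" using L_pos by simp

lemma coord_floor: "\<lfloor>real n / real L ^ j\<rfloor> = int (n div L ^ j)"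
  by (metis floor_divide_of_nat_eq of_nat_power)

lemma div_lt_pow: "n < L ^ m \<Longrightarrow> j \<le> m \<Longrightarrow> n div L ^ j < L ^ (m - j)"
proof -
  assume a: "n < L ^ m" "j \<le> m"
  have "L ^ m = L ^ (m - j) * L ^ j" using a(2) by (metis le_add_diff_inverse2 power_add)
  moreover have "0 < L ^ j" using L_gt_1 by simp
  ultimately show ?thesis using a(1) by (simp add: div_less_iff_less_mult)
qed

lemma vec_floor_in_OmJj: assumes "x \<in> OmJ L m j" "j \<le> m" shows "vec_floor x \<in> OmJj L m j"
proof -
  { fix \<mu>
    obtain n where n: "n < L ^ m" "x$\<mu> = 1 / real L ^ j * real n" using assms(1) by (auto simp: OmJ_def lat_def)
    then have "\<exists>k<L ^ (m - j). vec_floor x $ \<mu> = 1 * real k"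
      using assms(2) by (intro exI[of _ "n div L^j"]) (simp add: vec_floor_def coord_floor div_lt_pow)
  }
  then show ?thesis by (simp add: OmJj_def lat_def)
qed

lemma floor_lat_coord: "\<lfloor>1 / real L ^ j * real n\<rfloor> = int (n div L ^ j)"
  using coord_floor by simp

lemma box_inter_OmJ:
  assumes y: "y \<in> OmJj L m j"
  shows "box (1 / real L ^ j) (real L ^ j) y \<inter> OmJ L m j = {z \<in> OmJ L m j. vec_floor z = y}"
proof -
  have c: "(y$\<mu> \<le> z$\<mu> \<and> z$\<mu> < y$\<mu> + 1) \<longleftrightarrow> vec_floor z $ \<mu> = y$\<mu>" for z \<mu>
  proof -
    obtain k where k: "y$\<mu> = real k" using y by (auto simp: OmJj_def lat_def)
    have "vec_floor z $ \<mu> = y$\<mu> \<longleftrightarrow> \<lfloor>z$\<mu>\<rfloor> = int k"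
      using of_int_eq_iff[of "\<lfloor>z$\<mu>\<rfloor>" "int k", where 'a=real] by (simp add: vec_floor_def k)
    also have "\<dots> \<longleftrightarrow> real k \<le> z$\<mu> \<and> z$\<mu> < real k + 1" by (simp add: floor_eq_iff)
    finally show ?thesis by (simp add: k)
  qed
  have g: "z \<in> OmJ L m j \<Longrightarrow> \<exists>i::int. z$\<mu> = 1 / real L ^ j * of_int i" for z :: "real^'d" and \<mu>
    by (auto simp: OmJ_def lat_def) (metis of_int_of_nat_eq)
  have one: "real L ^ j * (1 / real L ^ j) = 1" using L_pow_pos by simp
  show ?thesis
    unfolding box_def one using c g by (auto simp: vec_eq_iff)
qed

lemma block_corner_in_OmJj1:
  assumes y: "y \<in> OmJj L m j" and j: "j < m"
  shows "block_corner L y \<in> OmJj1 L m j"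
proof -
  { fix \<mu>
    obtain k where k: "k < L ^ (m - j)" "y$\<mu> = 1 * real k" using y by (auto simp: OmJj_def lat_def)
    have fl: "\<lfloor>inverse (real L) * real k\<rfloor> = int (k div L)"
      using coord_floor[of k 1] by (simp add: divide_inverse mult.commute)
    have "k div L ^ 1 < L ^ (m - j - 1)" using div_lt_pow[of k "m - j" 1] k j by simp
    then have "\<exists>p<L ^ (m - j - 1). block_corner L y $ \<mu> = real L * real p"
      using k fl by (intro exI[of _ "k div L"]) (simp add: block_corner_def vec_floor_def)
  }
  then show ?thesis by (simp add: OmJj1_def lat_def)
qed

lemma box_inter_OmJj:
  assumes Y: "Y \<in> OmJj1 L m j"
  shows "box 1 (real L) Y \<inter> OmJj L m j = {y \<in> OmJj L m j. block_corner L y = Y}"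
proof -
  have c: "block_corner L y $ \<mu> = Y$\<mu> \<longleftrightarrow> (Y$\<mu> \<le> y$\<mu> \<and> y$\<mu> < Y$\<mu> + real L)" if yT: "y \<in> OmJj L m j" for y \<mu>
  proof -
    obtain p where p: "Y$\<mu> = real L * real p" using Y by (auto simp: OmJj1_def lat_def)
    obtain k where k: "y$\<mu> = real k" using yT by (auto simp: OmJj_def lat_def)
    have fl: "\<lfloor>inverse (real L) * real k\<rfloor> = int (k div L)"
      using coord_floor[of k 1] by (simp add: divide_inverse mult.commute)
    have "block_corner L y $ \<mu> = real L * real (k div L)" by (simp add: block_corner_def vec_floor_def k fl)
    then have "block_corner L y $ \<mu> = Y$\<mu> \<longleftrightarrow> k div L = p" using p L_pos by simp
    also have "\<dots> \<longleftrightarrow> L * p \<le> k \<and> k < L * p + L" using nat_div_eq_iff L_gt_1 by simp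
    also have "\<dots> \<longleftrightarrow> real L * real p \<le> real k \<and> real k < real L * real p + real L"
      by (metis of_nat_add of_nat_le_iff of_nat_less_iff of_nat_mult)
    finally show ?thesis using p k by simp
  qed
  have g: "y \<in> OmJj L m j \<Longrightarrow> \<exists>i::int. y$\<mu> = 1 * of_int i" for y :: "real^'d" and \<mu>
    by (auto simp: OmJj_def lat_def) (metis of_int_of_nat_eq)
  show ?thesis
    unfolding box_def using g by (auto simp: vec_eq_iff c)
qed

lemma OmJ_Suc_iff: "x \<in> OmJ L m (Suc j) \<longleftrightarrow> real L *\<^sub>R x \<in> OmJ L m j"
proof -
  have "(x$\<mu> = 1 / real L ^ Suc j * real n) \<longleftrightarrow> (real L * x$\<mu> = 1 / real L ^ j * real n)" for \<mu> n
    using L_pos by (auto simp: field_simps)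
  then show ?thesis by (simp add: OmJ_def lat_def)
qed

lemma block_corner_vec_floor:
  assumes z: "z \<in> OmJ L m j"
  shows "block_corner L (vec_floor z) = real L *\<^sub>R vec_floor (inverse (real L) *\<^sub>R z)"
proof -
  { fix \<mu>
    obtain n where n: "z$\<mu> = 1 / real L ^ j * real n" using z by (auto simp: OmJ_def lat_def)
    have a: "\<lfloor>z$\<mu>\<rfloor> = int (n div L ^ j)" using n floor_lat_coord by simp
    have b: "\<lfloor>inverse (real L) * real (n div L ^ j)\<rfloor> = int (n div L ^ j div L)"
      using coord_floor[of "n div L ^ j" 1] by (simp add: divide_inverse mult.commute)
    have "inverse (real L) * z$\<mu> = 1 / real L ^ Suc j * real n" using n by (simp add: field_simps)
    then have c: "\<lfloor>inverse (real L) * z$\<mu>\<rfloor> = int (n div L ^ Suc j)" using coord_floor[of n "Suc j"] by simp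
    have "n div L ^ j div L = n div L ^ Suc j" by (metis div_mult2_eq power_Suc2)
    then have "block_corner L (vec_floor z) $ \<mu> = (real L *\<^sub>R vec_floor (inverse (real L) *\<^sub>R z)) $ \<mu>"
      using a b c by (simp add: block_corner_def vec_floor_def)
  }
  then show ?thesis by (simp add: vec_eq_iff)
qed

lemma block_corner_vec_floor_scaled:
  assumes x: "x \<in> OmJ L m (Suc j)"
  shows "block_corner L (vec_floor (real L *\<^sub>R x)) = real L *\<^sub>R vec_floor x"
proof -
  have "real L *\<^sub>R x \<in> OmJ L m j" using x OmJ_Suc_iff by blast
  from block_corner_vec_floor[OF this] show ?thesis using L_pos by simp
qed

lemma mem_box_1_iff:
  assumes "y \<in> OmJj L m j"
  shows "y \<in> box 1 (real L) Y \<longleftrightarrow> (\<forall>\<mu>. Y$\<mu> \<le> y$\<mu> \<and> y$\<mu> < Y$\<mu> + real L)"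
proof -
  have "\<forall>\<mu>. \<exists>i::int. y$\<mu> = 1 * of_int i" using assms
    by (auto simp: OmJj_def lat_def) (metis of_int_of_nat_eq)
  then show ?thesis by (simp add: box_def)
qed

lemma block_corner_fibre_eq_image:
  fixes Y :: "real^'d"
  assumes Y: "Y \<in> OmJj1 L m j" and j: "j < m"
  shows "{y \<in> OmJj L m j. block_corner L y = Y} = (\<lambda>t. Y + (\<chi> \<mu>. real (t \<mu>))) ` Pi\<^sub>E UNIV (\<lambda>_. {..<L})"
proof -
  obtain p where p: "\<forall>\<mu>. p \<mu> < L ^ (m - j - 1)" "Y = lat_point (real L) p"
    using Y by (auto simp: OmJj1_def mem_lat_iff)
  show ?thesis
  proof (intro equalityI subsetI)
    fix y assume "y \<in> {y \<in> OmJj L m j. block_corner L y = Y}"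
    then have y: "y \<in> OmJj L m j" and "y \<in> box 1 (real L) Y" using box_inter_OmJj[OF Y] by auto
    then have box: "Y$\<mu> \<le> y$\<mu> \<and> y$\<mu> < Y$\<mu> + real L" for \<mu> using mem_box_1_iff by blast
    obtain k where k: "y = lat_point 1 k" using y by (auto simp: OmJj_def mem_lat_iff)
    have ineq: "L * p \<mu> \<le> k \<mu> \<and> k \<mu> < L * p \<mu> + L" for \<mu>
    proof -
      have "real (L * p \<mu>) \<le> real (k \<mu>) \<and> real (k \<mu>) < real (L * p \<mu> + L)"
        using box[of \<mu>] k p by (simp add: lat_point_def)
      then show ?thesis by (simp only: of_nat_le_iff of_nat_less_iff)
    qed
    define t where "t \<mu> = k \<mu> - L * p \<mu>" for \<mu>
    have "t \<mu> < L" for \<mu> using ineq[of \<mu>] unfolding t_def by linarith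
    then have "t \<in> Pi\<^sub>E UNIV (\<lambda>_. {..<L})" by (auto simp: PiE_iff)
    moreover have "y = Y + (\<chi> \<mu>. real (t \<mu>))"
      using ineq by (auto simp: vec_eq_iff t_def k p lat_point_def)
    ultimately show "y \<in> (\<lambda>t. Y + (\<chi> \<mu>. real (t \<mu>))) ` Pi\<^sub>E UNIV (\<lambda>_. {..<L})" by blast
  next
    fix y assume "y \<in> (\<lambda>t. Y + (\<chi> \<mu>. real (t \<mu>))) ` Pi\<^sub>E UNIV (\<lambda>_. {..<L})"
    then obtain t where t: "\<forall>\<mu>. t \<mu> < L" "y = Y + (\<chi> \<mu>. real (t \<mu>))" by (auto simp: PiE_iff)
    have "L * p \<mu> + t \<mu> < L ^ (m - j)" for \<mu>
    proof -
      have "L * p \<mu> + t \<mu> < L * (p \<mu> + 1)" using t by simp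
      also have "\<dots> \<le> L * L ^ (m - j - 1)" using p(1) by (intro mult_le_mono2) (simp add: Suc_le_eq)
      also have "\<dots> = L ^ (m - j)" using j by (metis Suc_diff_Suc diff_Suc_1 power_Suc)
      finally show ?thesis .
    qed
    then have y: "y \<in> OmJj L m j"
      unfolding OmJj_def mem_lat_iff using t p
      by (intro exI[of _ "\<lambda>\<mu>. L * p \<mu> + t \<mu>"]) (auto simp: vec_eq_iff lat_point_def)
    moreover have "y \<in> box 1 (real L) Y" unfolding mem_box_1_iff[OF y] using t by auto
    ultimately show "y \<in> {y \<in> OmJj L m j. block_corner L y = Y}" using box_inter_OmJj[OF Y] by auto
  qed
qed

lemma card_block_corner_fibre:
  fixes Y :: "real^'d"
  assumes "Y \<in> OmJj1 L m j" and "j < m"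
  shows "card {y \<in> OmJj L m j. block_corner L y = Y} = L ^ CARD('d)"
proof -
  have "inj_on (\<lambda>t. Y + (\<chi> \<mu>. real (t \<mu>))) (Pi\<^sub>E UNIV (\<lambda>_. {..<L}))"
    by (auto simp: inj_on_def vec_eq_iff fun_eq_iff)
  then have "card ((\<lambda>t. Y + (\<chi> \<mu>. real (t \<mu>))) ` Pi\<^sub>E UNIV (\<lambda>_. {..<L})) = card (Pi\<^sub>E (UNIV::'d set) (\<lambda>_. {..<L}))"
    by (rule card_image)
  then show ?thesis unfolding block_corner_fibre_eq_image[OF assms] by (simp add: card_PiE)
qed

lemma finite_OmJ: "finite (OmJ L m j)" by (simp add: OmJ_def finite_lat)
lemma finite_OmJj: "finite (OmJj L m j)" by (simp add: OmJj_def finite_lat)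
lemma finite_OmJj1: "finite (OmJj1 L m j)" by (simp add: OmJj1_def finite_lat)
lemma zero_in_OmJ: "0 \<in> OmJ L m j" using L_gt_1 by (simp add: OmJ_def zero_in_lat)
lemma zero_in_OmJj: "0 \<in> OmJj L m j" using L_gt_1 by (simp add: OmJj_def zero_in_lat)

lemma const_if_bond_sum_zero:
  fixes u :: "real^'d \<Rightarrow> complex"
  assumes zero: "(\<Sum>\<mu>\<in>UNIV. \<Sum>w\<in>{w\<in>OmJ L m j. w + (1 / real L ^ j) *\<^sub>R axis \<mu> 1 \<in> OmJ L m j}.
      (cmod (u (w + (1 / real L ^ j) *\<^sub>R axis \<mu> 1) - u w))\<^sup>2) = 0"
    and x: "x \<in> OmJ L m j"
  shows "u x = u 0"
proof (rule lat_const_if_bonds_const[where e="1 / real L ^ j" and N="L ^ m"])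
  show "x \<in> lat (1 / real L ^ j) (L ^ m)" using x by (simp add: OmJ_def)
  fix w :: "real^'d" and \<mu> :: 'd
  assume "w \<in> lat (1 / real L ^ j) (L ^ m)" "w + (1 / real L ^ j) *\<^sub>R axis \<mu> 1 \<in> lat (1 / real L ^ j) (L ^ m)"
  then have w: "w \<in> OmJ L m j" "w + (1 / real L ^ j) *\<^sub>R axis \<mu> 1 \<in> OmJ L m j" by (simp_all add: OmJ_def)
  have "(\<Sum>w\<in>{w\<in>OmJ L m j. w + (1 / real L ^ j) *\<^sub>R axis \<mu> 1 \<in> OmJ L m j}.
      (cmod (u (w + (1 / real L ^ j) *\<^sub>R axis \<mu> 1) - u w))\<^sup>2) = 0"
    using zero by (subst (asm) sum_nonneg_eq_0_iff) (auto intro!: sum_nonneg)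
  then show "u (w + (1 / real L ^ j) *\<^sub>R axis \<mu> 1) = u w"
    using w by (subst (asm) sum_nonneg_eq_0_iff) (auto simp: finite_OmJ)
qed

lemma QJ_eq:
  fixes u :: "real^'d \<Rightarrow> complex"
  assumes "y \<in> OmJj L m j"
  shows "QJ L m j u y = complex_of_real (1 / (real L ^ j) ^ CARD('d)) * (\<Sum>z\<in>{z \<in> OmJ L m j. vec_floor z = y}. u z)"
  unfolding QJ_def avg_def box_inter_OmJ[OF assms] ..

lemma QJs_eq:
  assumes "j \<le> m"
  shows "QJs L m j g = (\<lambda>x. if x \<in> OmJ L m j then g (vec_floor x) else 0)"
  unfolding QJs_def
  by (rule adj_fibre_average[OF _ finite_OmJ finite_OmJj _ QJ_eq]) (use assms vec_floor_in_OmJj L_pos in \<open>auto simp: power_one_over\<close>)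

lemma ip_QJ_left:
  assumes "j \<le> m"
  shows "ip 1 (OmJj L m j) (QJ L m j u) g = ip (1 / real L ^ j) (OmJ L m j) u (QJs L m j g)"
  unfolding QJs_eq[OF assms]
  by (rule ip_fibre_average[OF finite_OmJ finite_OmJj _ QJ_eq]) (use assms vec_floor_in_OmJj in \<open>auto simp: power_one_over\<close>)

lemma Q1_eq:
  fixes u :: "real^'d \<Rightarrow> complex"
  assumes "Y \<in> OmJj1 L m j"
  shows "Q1 L m j u Y = complex_of_real (1 / real L ^ CARD('d)) * (\<Sum>y\<in>{y \<in> OmJj L m j. block_corner L y = Y}. u y)"
  unfolding Q1_def avg_def box_inter_OmJj[OF assms] ..

lemma Q1s_eq:
  assumes "j < m"
  shows "Q1s L m j g = (\<lambda>y. if y \<in> OmJj L m j then g (block_corner L y) else 0)"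
  unfolding Q1s_def
  by (rule adj_fibre_average[OF _ finite_OmJj finite_OmJj1 _ Q1_eq]) (use assms block_corner_in_OmJj1 L_pos in auto)

lemma ip_Q1_left:
  assumes "j < m"
  shows "ip (real L) (OmJj1 L m j) (Q1 L m j u) g = ip 1 (OmJj L m j) u (Q1s L m j g)"
  unfolding Q1s_eq[OF assms]
  by (rule ip_fibre_average[OF finite_OmJj finite_OmJj1 _ Q1_eq]) (use assms block_corner_in_OmJj1 L_pos in auto)

lemma Q1_Q1s:
  fixes g :: "real^'d \<Rightarrow> complex"
  assumes Y: "Y \<in> OmJj1 L m j" and j: "j < m"
  shows "Q1 L m j (Q1s L m j g) Y = g Y"
proof -
  have "Q1 L m j (Q1s L m j g) Y =
      complex_of_real (1 / real L ^ CARD('d)) * (\<Sum>y\<in>{y \<in> OmJj L m j. block_corner L y = Y}. g Y)"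
    unfolding Q1_eq[OF Y] by (intro arg_cong2[where f="(*)"] sum.cong) (auto simp: Q1s_eq[OF j])
  also have "\<dots> = g Y" using card_block_corner_fibre[OF Y j] L_pos by simp
  finally show ?thesis .
qed

lemma QJ_add: "QJ L m j (\<lambda>z. u z + v z) y = QJ L m j u y + QJ L m j v y"
  unfolding QJ_def by (rule avg_add)

lemma QJ_scale: "QJ L m j (\<lambda>z. c * u z) y = c * QJ L m j u y"
  unfolding QJ_def by (rule avg_scale)

lemma Q1_add: "Q1 L m j (\<lambda>z. u z + v z) y = Q1 L m j u y + Q1 L m j v y"
  unfolding Q1_def by (rule avg_add)

lemma Q1_scale: "Q1 L m j (\<lambda>z. c * u z) y = c * Q1 L m j u y"
  unfolding Q1_def by (rule avg_scale)

lemma Q1_cong: "(\<And>z. z \<in> OmJj L m j \<Longrightarrow> u z = v z) \<Longrightarrow> Q1 L m j u y = Q1 L m j v y"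
  unfolding Q1_def by (rule avg_cong)

lemma QJs_add: "j \<le> m \<Longrightarrow> QJs L m j (\<lambda>z. u z + v z) = (\<lambda>x. QJs L m j u x + QJs L m j v x)"
  by (simp add: QJs_eq fun_eq_iff)

lemma QJs_scale: "j \<le> m \<Longrightarrow> QJs L m j (\<lambda>z. c * u z) = (\<lambda>x. c * QJs L m j u x)"
  by (simp add: QJs_eq fun_eq_iff)

lemma QJs_QJ_eq:
  fixes u :: "real^'d \<Rightarrow> complex"
  assumes "j \<le> m" "x \<in> OmJ L m j"
  shows "QJs L m j (QJ L m j u) x = complex_of_real (1 / (real L ^ j) ^ CARD('d)) *
    (\<Sum>z\<in>{z \<in> OmJ L m j. vec_floor z = vec_floor x}. u z)"
  using assms by (simp add: QJs_eq QJ_eq vec_floor_in_OmJj)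

lemma ip_Q1s_Q1_self:
  fixes \<psi> :: "real^'d \<Rightarrow> complex"
  assumes "j < m"
  shows "ip 1 (OmJj L m j) \<psi> (Q1s L m j (Q1 L m j \<psi>)) =
    complex_of_real (real L ^ CARD('d) * (\<Sum>Y\<in>OmJj1 L m j. (cmod (Q1 L m j \<psi> Y))\<^sup>2))"
  unfolding ip_Q1_left[OF assms, symmetric] ip_self ..

lemma Q1_QJ_eq:
  fixes \<phi> :: "real^'d \<Rightarrow> complex"
  assumes j: "j \<le> m" and Y: "Y \<in> OmJj1 L m j"
  shows "Q1 L m j (QJ L m j \<phi>) Y = complex_of_real (1 / (real L ^ Suc j) ^ CARD('d)) *
    (\<Sum>z\<in>{z \<in> OmJ L m j. block_corner L (vec_floor z) = Y}. \<phi> z)"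
proof -
  let ?F = "{y \<in> OmJj L m j. block_corner L y = Y}"
  let ?S = "{z \<in> OmJ L m j. block_corner L (vec_floor z) = Y}"
  have "Q1 L m j (QJ L m j \<phi>) Y = complex_of_real (1 / real L ^ CARD('d)) *
      (\<Sum>y\<in>?F. complex_of_real (1 / (real L ^ j) ^ CARD('d)) * (\<Sum>z\<in>{z \<in> ?S. vec_floor z = y}. \<phi> z))"
    unfolding Q1_eq[OF Y] by (intro arg_cong2[where f="(*)"] sum.cong refl) (auto simp: QJ_eq intro!: sum.cong)
  also have "(\<Sum>y\<in>?F. complex_of_real (1 / (real L ^ j) ^ CARD('d)) * (\<Sum>z\<in>{z \<in> ?S. vec_floor z = y}. \<phi> z)) =
      complex_of_real (1 / (real L ^ j) ^ CARD('d)) * sum \<phi> ?S"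
    unfolding sum_distrib_left[symmetric]
  proof (rule arg_cong[where f="(*) _"], rule sum.group)
    show "finite ?S" by (rule finite_subset[OF _ finite_OmJ]) auto
    show "finite ?F" by (rule finite_subset[OF _ finite_OmJj]) auto
    show "vec_floor ` ?S \<subseteq> ?F" using vec_floor_in_OmJj[OF _ j] by auto
  qed
  finally show ?thesis by (simp add: power_mult_distrib)
qed

lemma block_corner_fibre_rescale:
  assumes x: "x \<in> OmJ L m (Suc j)"
  shows "{z \<in> OmJ L m j. block_corner L (vec_floor z) = real L *\<^sub>R vec_floor x}
    = (\<lambda>z. real L *\<^sub>R z) ` {z \<in> OmJ L m (Suc j). vec_floor z = vec_floor x}"
proof (intro equalityI subsetI)
  fix z assume z: "z \<in> {z \<in> OmJ L m j. block_corner L (vec_floor z) = real L *\<^sub>R vec_floor x}"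
  then have "inverse (real L) *\<^sub>R z \<in> OmJ L m (Suc j)" using L_pos by (simp add: OmJ_Suc_iff)
  moreover have "vec_floor (inverse (real L) *\<^sub>R z) = vec_floor x"
    using z block_corner_vec_floor[of z m j] L_pos by simp
  moreover have "z = real L *\<^sub>R (inverse (real L) *\<^sub>R z)" using L_pos by simp
  ultimately show "z \<in> (\<lambda>z. real L *\<^sub>R z) ` {z \<in> OmJ L m (Suc j). vec_floor z = vec_floor x}"
    by blast
next
  fix z assume "z \<in> (\<lambda>z. real L *\<^sub>R z) ` {z \<in> OmJ L m (Suc j). vec_floor z = vec_floor x}"
  then obtain b where "b \<in> OmJ L m (Suc j)" "vec_floor b = vec_floor x" "z = real L *\<^sub>R b" by blast
  then show "z \<in> {z \<in> OmJ L m j. block_corner L (vec_floor z) = real L *\<^sub>R vec_floor x}"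
    using block_corner_vec_floor_scaled[of b m j] by (simp add: OmJ_Suc_iff)
qed

lemma QJs_Q1s_Q1_QJ_rescale:
  fixes \<phi> :: "real^'d \<Rightarrow> complex"
  assumes j: "j < m" and x: "x \<in> OmJ L m (Suc j)"
  shows "QJs L m j (Q1s L m j (Q1 L m j (QJ L m j \<phi>))) (real L *\<^sub>R x) =
    QJs L m (Suc j) (QJ L m (Suc j) (\<lambda>z. \<phi> (real L *\<^sub>R z))) x"
proof -
  have Lx: "real L *\<^sub>R x \<in> OmJ L m j" using x OmJ_Suc_iff by blast
  have floor_Lx: "vec_floor (real L *\<^sub>R x) \<in> OmJj L m j" using vec_floor_in_OmJj[OF Lx] j by simp
  have corner: "block_corner L (vec_floor (real L *\<^sub>R x)) = real L *\<^sub>R vec_floor x"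
    by (rule block_corner_vec_floor_scaled[OF x])
  have Y: "real L *\<^sub>R vec_floor x \<in> OmJj1 L m j" using block_corner_in_OmJj1[OF floor_Lx j] corner by simp
  have inj: "inj_on (\<lambda>z. real L *\<^sub>R z) A" for A :: "(real^'d) set" using L_pos by (auto intro: inj_onI)
  have "QJs L m j (Q1s L m j (Q1 L m j (QJ L m j \<phi>))) (real L *\<^sub>R x) = Q1 L m j (QJ L m j \<phi>) (real L *\<^sub>R vec_floor x)"
    using Lx floor_Lx corner j by (simp add: QJs_eq Q1s_eq)
  also have "\<dots> = complex_of_real (1 / (real L ^ Suc j) ^ CARD('d)) *
      (\<Sum>z\<in>{z \<in> OmJ L m (Suc j). vec_floor z = vec_floor x}. \<phi> (real L *\<^sub>R z))"
    by (simp only: Q1_QJ_eq[OF less_imp_le[OF j] Y] block_corner_fibre_rescale[OF x] sum.reindex[OF inj] comp_def)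
  also have "\<dots> = QJs L m (Suc j) (QJ L m (Suc j) (\<lambda>z. \<phi> (real L *\<^sub>R z))) x"
    unfolding QJs_QJ_eq[OF Suc_leI[OF j] x] ..
  finally show ?thesis .
qed

lemma nlap_rescale:
  fixes \<phi> :: "real^'d \<Rightarrow> complex"
  shows "nlap (1 / real L ^ Suc j) (OmJ L m (Suc j)) (\<lambda>z. \<phi> (real L *\<^sub>R z)) x
     = complex_of_real (real L ^ 2) * nlap (1 / real L ^ j) (OmJ L m j) \<phi> (real L *\<^sub>R x)"
proof -
  have sc: "real L *\<^sub>R (x + (1 / real L ^ Suc j) *\<^sub>R v) = real L *\<^sub>R x + (1 / real L ^ j) *\<^sub>R v"
    "real L *\<^sub>R (x - (1 / real L ^ Suc j) *\<^sub>R v) = real L *\<^sub>R x - (1 / real L ^ j) *\<^sub>R v" for v :: "real^'d"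
    using L_pos by (simp_all add: scaleR_right_distrib scaleR_right_diff_distrib)
  have mem: "z \<in> OmJ L m (Suc j) \<longleftrightarrow> real L *\<^sub>R z \<in> OmJ L m j" for z :: "real^'d" by (rule OmJ_Suc_iff)
  have c: "1 / (1 / real L ^ Suc j)\<^sup>2 = real L ^ 2 * (1 / (1 / real L ^ j)\<^sup>2)"
    by (simp add: power_mult_distrib power2_eq_square)
  show ?thesis unfolding nlap_def Let_def mem sc c by (simp only: of_real_mult mult.assoc)
qed

lemma id_plus_Q1s_Q1_inj:
  fixes \<psi> :: "real^'d \<Rightarrow> complex"
  assumes j: "j < m" and t: "t > 0" and \<psi>: "\<psi> \<in> Vsp (OmJj L m j)"
    and zero: "\<And>y. y \<in> OmJj L m j \<Longrightarrow> \<psi> y + complex_of_real t * Q1s L m j (Q1 L m j \<psi>) y = 0"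
  shows "\<psi> = (\<lambda>_. 0)"
proof -
  let ?N\<psi> = "\<Sum>y\<in>OmJj L m j. (cmod (\<psi> y))\<^sup>2" and ?NQ = "\<Sum>Y\<in>OmJj1 L m j. (cmod (Q1 L m j \<psi> Y))\<^sup>2"
  have "0 = ip 1 (OmJj L m j) \<psi> (\<lambda>y. \<psi> y + complex_of_real t * Q1s L m j (Q1 L m j \<psi>) y)"
    using zero by (simp add: ip_def)
  also have "\<dots> = complex_of_real (?N\<psi> + t * (real L ^ CARD('d) * ?NQ))"
    unfolding ip_add_right ip_scale_right ip_Q1s_Q1_self[OF j] ip_self by simp
  finally have "complex_of_real (?N\<psi> + t * (real L ^ CARD('d) * ?NQ)) = 0" by (rule sym)
  then have "?N\<psi> + t * (real L ^ CARD('d) * ?NQ) = 0" by (simp only: of_real_eq_0_iff)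
  moreover have "?N\<psi> \<ge> 0" by (auto intro: sum_nonneg)
  moreover have "t * (real L ^ CARD('d) * ?NQ) \<ge> 0" using t L_pos by (auto intro!: mult_nonneg_nonneg sum_nonneg)
  ultimately have "?N\<psi> = 0" by linarith
  then have "\<forall>y\<in>OmJj L m j. \<psi> y = 0" by (simp add: sum_nonneg_eq_0_iff finite_OmJj)
  then show ?thesis using \<psi> by (auto simp: Vsp_def fun_eq_iff)
qed

end

lemma aj_pos:
  assumes "a > 0" and "L > 1" and "j \<ge> 1"
  shows "aj a L j > 0"
proof -
  have "real L ^ 2 > 1" "real L ^ (2 * j) > 1" using assms(2,3) by simp_all
  then have "1 - 1 / real L ^ 2 > 0" "1 - 1 / real L ^ (2 * j) > 0" by (simp_all add: divide_less_eq)
  then show ?thesis using assms(1) by (simp add: aj_def)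
qed

lemma aj_Suc:
  assumes "L > 1" and "j \<ge> 1"
  shows "aj a L (Suc j) * (aj a L j + a / real L ^ 2) = a * aj a L j"
proof -
  define q where "q = 1 / real L ^ 2"
  define Q P where "Q = q ^ j" and "P = q ^ Suc j"
  have q: "0 < q" "q < 1" using assms(1) by (simp_all add: q_def)
  have less1: "q ^ i < 1" if "i > 0" for i using q that by (simp add: power_less_one_iff)
  have pos: "1 - Q > 0" "1 - P > 0"
    using less1[of j] less1[of "Suc j"] assms(2) unfolding Q_def P_def by linarith+
  have aj_q: "aj a L i = a * (1 - q) / (1 - q ^ i)" for i
    by (simp add: aj_def q_def power_mult power_one_over)
  have aq: "a / real L ^ 2 = a * q" by (simp add: q_def)
  have plus_aq: "a * (1 - q) / (1 - Q) + a * q = a * (1 - P) / (1 - Q)"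
    using pos(1) unfolding P_def Q_def by (simp add: field_simps)
  have aj_j: "aj a L j = a * (1 - q) / (1 - Q)" by (simp add: aj_q Q_def)
  have "aj a L (Suc j) * (aj a L j + a / real L ^ 2) = a * (1 - q) / (1 - P) * (a * (1 - P) / (1 - Q))"
    unfolding aj_j aq plus_aq by (simp add: aj_q P_def)
  also have "\<dots> = a * (a * (1 - q) / (1 - Q))"
    using pos(2) by (simp add: divide_simps del: diff_gt_0_iff_gt)
  finally show ?thesis unfolding aj_j .
qed

lemma aj_Suc_coeff:
  assumes "a > 0" and "L > 1" and "j \<ge> 1"
  shows "aj a L (Suc j) / real L ^ 2 * (1 + a / real L ^ 2 / aj a L j) = a / real L ^ 2"
proof -
  have "aj a L j > 0" using aj_pos[OF assms] .
  then have "aj a L (Suc j) / real L ^ 2 * (1 + a / real L ^ 2 / aj a L j) =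
      aj a L (Suc j) * (aj a L j + a / real L ^ 2) / (real L ^ 2 * aj a L j)"
    using assms(2) by (simp add: field_simps)
  also have "\<dots> = a / real L ^ 2"
    unfolding aj_Suc[OF assms(2,3)] using \<open>aj a L j > 0\<close> by simp
  finally show ?thesis .
qed

lemma rescale_1: "rescale 1 f = f"
  by (simp add: rescale_def)

lemma rescale_rescale: "s \<noteq> 0 \<Longrightarrow> t \<noteq> 0 \<Longrightarrow> rescale s (rescale t f) = rescale (s * t) f"
  by (simp add: rescale_def fun_eq_iff mult.commute)

lemma scaled_term_Suc:
  fixes T :: "(real^'d \<Rightarrow> complex) \<Rightarrow> real^'d \<Rightarrow> complex"
  assumes "L > 0" and "j \<le> k"
  shows "complex_of_real (1 / real L ^ 2) * (complex_of_real (1 / (real L ^ (k - j))\<^sup>2) *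
        T (rescale (real L ^ (k - j)) (rescale (real L) f)) (real L ^ (k - j) *\<^sub>R (real L *\<^sub>R x)))
      = complex_of_real (1 / (real L ^ (Suc k - j))\<^sup>2) * T (rescale (real L ^ (Suc k - j)) f) (real L ^ (Suc k - j) *\<^sub>R x)"
proof -
  have pw: "real L ^ (k - j) * real L = real L ^ (Suc k - j)"
    using assms(2) by (simp add: Suc_diff_le)
  have "1 / real L ^ 2 * (1 / (real L ^ (k - j))\<^sup>2) = 1 / (real L ^ (Suc k - j))\<^sup>2"
    unfolding pw[symmetric] by (simp add: power_mult_distrib)
  then have c: "complex_of_real (1 / real L ^ 2) * complex_of_real (1 / (real L ^ (k - j))\<^sup>2) =
      complex_of_real (1 / (real L ^ (Suc k - j))\<^sup>2)"
    by (simp only: of_real_mult[symmetric])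
  have "rescale (real L ^ (k - j)) (rescale (real L) f) = rescale (real L ^ (Suc k - j)) f"
    using assms(1) by (simp add: rescale_rescale pw)
  moreover have "real L ^ (k - j) *\<^sub>R (real L *\<^sub>R x) = real L ^ (Suc k - j) *\<^sub>R x"
    by (simp add: pw)
  ultimately show ?thesis by (simp only: mult.assoc[symmetric] c)
qed

locale rg_model = lattice_scale +
  fixes m :: nat and a mu0 :: real
  assumes a_pos: "a > 0" and mu0_nonneg: "mu0 \<ge> 0"
begin

definition Aop :: "nat \<Rightarrow> (real^'d \<Rightarrow> complex) \<Rightarrow> real^'d \<Rightarrow> complex" where
  "Aop j u x = - nlap (1 / real L ^ j) (OmJ L m j) u x + complex_of_real (mubar mu0 L j) * u x
            + complex_of_real (aj a L j) * QJs L m j (QJ L m j u) x"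

lemma Gop_eq_opinv: "Gop L m a mu0 j = opinv (OmJ L m j) (Aop j)"
  unfolding Gop_def Aop_def[abs_def] ..

lemma Aop_add:
  assumes "j \<le> m"
  shows "Aop j (\<lambda>z. u z + v z) x = Aop j u x + Aop j v x"
  using assms by (simp add: Aop_def nlap_add QJs_eq QJ_add algebra_simps)

lemma Aop_scale:
  assumes "j \<le> m"
  shows "Aop j (\<lambda>z. c * u z) x = c * Aop j u x"
  using assms by (simp add: Aop_def nlap_scale QJs_eq QJ_scale algebra_simps)

lemma linear_on_Vsp_Aop: "j \<le> m \<Longrightarrow> linear_on_Vsp (OmJ L m j) (Aop j)"
  unfolding linear_on_Vsp_def using Aop_add Aop_scale by blast

lemma ip_Aop:
  assumes "j \<le> m"
  shows "ip (1 / real L ^ j) (OmJ L m j) u (Aop j v)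
    = ip (1 / real L ^ j) (OmJ L m j) u (\<lambda>x. - nlap (1 / real L ^ j) (OmJ L m j) v x)
      + complex_of_real (mubar mu0 L j) * ip (1 / real L ^ j) (OmJ L m j) u v
      + complex_of_real (aj a L j) * ip 1 (OmJj L m j) (QJ L m j u) (QJ L m j v)"
  unfolding Aop_def[abs_def] ip_add_right ip_scale_right ip_QJ_left[OF assms] ..

lemma ip_Aop_swap:
  assumes "j \<le> m"
  shows "ip (1 / real L ^ j) (OmJ L m j) u (Aop j v) = cnj (ip (1 / real L ^ j) (OmJ L m j) v (Aop j u))"
  unfolding ip_Aop[OF assms] ip_neg_nlap[OF finite_OmJ]
  by (simp add: cnj_dirichlet_form cnj_ip)

lemma ip_Aop_self:
  fixes u :: "real^'d \<Rightarrow> complex"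
  assumes "j \<le> m" and e: "e = 1 / real L ^ j"
  shows "ip e (OmJ L m j) u (Aop j u) = complex_of_real
     (e ^ CARD('d) * (1 / e\<^sup>2) * (\<Sum>\<mu>\<in>UNIV. \<Sum>w\<in>{w\<in>OmJ L m j. w + e *\<^sub>R axis \<mu> 1 \<in> OmJ L m j}.
         (cmod (u (w + e *\<^sub>R axis \<mu> 1) - u w))\<^sup>2)
      + mubar mu0 L j * (e ^ CARD('d) * (\<Sum>x\<in>OmJ L m j. (cmod (u x))\<^sup>2))
      + aj a L j * (\<Sum>y\<in>OmJj L m j. (cmod (QJ L m j u y))\<^sup>2))"
  unfolding e ip_Aop[OF assms(1)] ip_neg_nlap[OF finite_OmJ] dirichlet_form_self ip_self
  by simp

lemma QJ_zero_imp_const_zero: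
  fixes u :: "real^'d \<Rightarrow> complex"
  assumes "j \<le> m" and const: "\<And>z. z \<in> OmJ L m j \<Longrightarrow> u z = c" and "QJ L m j u 0 = 0"
  shows "c = 0"
proof -
  let ?F = "{z \<in> OmJ L m j. vec_floor z = (0::real^'d)}"
  have "0 \<in> ?F" using zero_in_OmJ by (simp add: vec_floor_def vec_eq_iff)
  moreover have "finite ?F" by (rule finite_subset[OF _ finite_OmJ]) auto
  ultimately have "card ?F > 0" by (auto simp: card_gt_0_iff)
  moreover have "QJ L m j u 0 = complex_of_real (1 / (real L ^ j) ^ CARD('d)) * (of_nat (card ?F) * c)"
    unfolding QJ_eq[OF zero_in_OmJj] using const by simp
  ultimately show ?thesis using assms(3) L_pos by simp
qed

lemma inj_on_Vsp_Aop:
  assumes j: "1 \<le> j" "j \<le> m"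
  shows "inj_on_Vsp (OmJ L m j) (Aop j)"
  unfolding inj_on_Vsp_def
proof (intro ballI impI)
  fix u :: "real^'d \<Rightarrow> complex"
  assume uV: "u \<in> Vsp (OmJ L m j)" and z: "\<forall>y\<in>OmJ L m j. Aop j u y = 0"
  define e where "e = 1 / real L ^ j"
  define X1 where "X1 = (\<Sum>\<mu>\<in>UNIV. \<Sum>w\<in>{w\<in>OmJ L m j. w + e *\<^sub>R axis \<mu> 1 \<in> OmJ L m j}.
       (cmod (u (w + e *\<^sub>R axis \<mu> 1) - u w))\<^sup>2)"
  define X2 where "X2 = (\<Sum>x\<in>OmJ L m j. (cmod (u x))\<^sup>2)"
  define X3 where "X3 = (\<Sum>y\<in>OmJj L m j. (cmod (QJ L m j u y))\<^sup>2)"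
  have "ip e (OmJ L m j) u (Aop j u) = 0" using z by (simp add: ip_def)
  then have sum0: "e ^ CARD('d) * (1 / e\<^sup>2) * X1 + mubar mu0 L j * (e ^ CARD('d) * X2) + aj a L j * X3 = 0"
    unfolding ip_Aop_self[OF j(2) e_def] X1_def X2_def X3_def of_real_eq_0_iff .
  have e: "e > 0" using L_pos by (simp add: e_def)
  have X: "X1 \<ge> 0" "X2 \<ge> 0" "X3 \<ge> 0" unfolding X1_def X2_def X3_def by (auto intro!: sum_nonneg)
  have "e ^ CARD('d) * (1 / e\<^sup>2) * X1 \<ge> 0" "mubar mu0 L j * (e ^ CARD('d) * X2) \<ge> 0" "aj a L j * X3 \<ge> 0"
    using X e mu0_nonneg aj_pos[OF a_pos L_gt_1 j(1)] by (simp_all add: mubar_def)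
  then have "e ^ CARD('d) * (1 / e\<^sup>2) * X1 = 0" "aj a L j * X3 = 0" using sum0 by linarith+
  then have X1: "X1 = 0" and X3: "X3 = 0" using e aj_pos[OF a_pos L_gt_1 j(1)] by auto
  then have const: "u x = u 0" if "x \<in> OmJ L m j" for x
    using const_if_bond_sum_zero[of u j m x] that unfolding X1_def e_def by blast
  have "QJ L m j u 0 = 0"
    using X3 zero_in_OmJj unfolding X3_def by (subst (asm) sum_nonneg_eq_0_iff) (auto simp: finite_OmJj)
  then have "u 0 = 0" using QJ_zero_imp_const_zero[where u=u and c="u 0"] j(2) const by blast
  show "u = (\<lambda>_. 0)"
  proof
    fix x show "u x = 0" using const[of x] \<open>u 0 = 0\<close> uV by (auto simp: Vsp_def)
  qed
qed

lemma Gop_solves: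
  assumes j: "1 \<le> j" "j \<le> m"
  shows Gop_in_Vsp: "Gop L m a mu0 j f \<in> Vsp (OmJ L m j)"
    and Aop_Gop: "x \<in> OmJ L m j \<Longrightarrow> Aop j (Gop L m a mu0 j f) x = f x"
  unfolding Gop_eq_opinv
  using opinv_solves[OF finite_OmJ linear_on_Vsp_Aop[OF j(2)] inj_on_Vsp_Aop[OF j]] by auto

lemma Gop_outside:
  assumes "1 \<le> j" "j \<le> m" and "x \<notin> OmJ L m j"
  shows "Gop L m a mu0 j g x = 0"
  using Gop_in_Vsp[OF assms(1,2), of g] assms(3) by (simp add: Vsp_def)

lemma Gop_eqI:
  assumes j: "1 \<le> j" "j \<le> m" and h: "h \<in> Vsp (OmJ L m j)" and eq: "\<And>x. x \<in> OmJ L m j \<Longrightarrow> Aop j h x = f x"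
  shows "Gop L m a mu0 j f = h"
  unfolding Gop_eq_opinv by (rule opinv_eqI[OF linear_on_Vsp_Aop[OF j(2)] inj_on_Vsp_Aop[OF j] h eq])

lemma Gop_add:
  assumes j: "1 \<le> j" "j \<le> m"
  shows "Gop L m a mu0 j (\<lambda>x. f x + g x) = (\<lambda>x. Gop L m a mu0 j f x + Gop L m a mu0 j g x)"
  using Gop_solves[OF j, where f=f] Gop_solves[OF j, where f=g]
  by (intro Gop_eqI[OF j]) (auto simp: Vsp_def Aop_add[OF j(2)])

lemma Gop_scale:
  assumes j: "1 \<le> j" "j \<le> m"
  shows "Gop L m a mu0 j (\<lambda>x. c * f x) = (\<lambda>x. c * Gop L m a mu0 j f x)"
  using Gop_solves[OF j, where f=f]
  by (intro Gop_eqI[OF j]) (auto simp: Vsp_def Aop_scale[OF j(2)])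

lemma ip_Gop_swap:
  assumes j: "1 \<le> j" "j \<le> m"
  shows "ip (1 / real L ^ j) (OmJ L m j) (Gop L m a mu0 j u) v = ip (1 / real L ^ j) (OmJ L m j) u (Gop L m a mu0 j v)"
proof -
  let ?e = "1 / real L ^ j" and ?S = "OmJ L m j" and ?G = "Gop L m a mu0 j"
  have "ip ?e ?S (?G u) v = ip ?e ?S (?G u) (Aop j (?G v))"
    using Gop_solves[OF j, where f=v] by (intro ip_cong) auto
  also have "\<dots> = cnj (ip ?e ?S (?G v) (Aop j (?G u)))" by (rule ip_Aop_swap[OF j(2)])
  also have "ip ?e ?S (?G v) (Aop j (?G u)) = ip ?e ?S (?G v) u"
    using Gop_solves[OF j, where f=u] by (intro ip_cong) auto
  finally show ?thesis by (simp add: cnj_ip)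
qed

lemma Hs_eq:
  fixes g :: "real^'d \<Rightarrow> complex"
  assumes j: "1 \<le> j" "j \<le> m"
  shows "Hs L m a mu0 j g =
    (\<lambda>y. if y \<in> OmJj L m j then complex_of_real (aj a L j) * QJ L m j (Gop L m a mu0 j g) y else 0)"
  unfolding Hs_def
proof (rule adj_eqI)
  let ?e = "1 / real L ^ j" and ?S = "OmJ L m j" and ?T = "OmJj L m j" and ?G = "Gop L m a mu0 j"
  let ?c = "complex_of_real (aj a L j)"
  show "(\<lambda>y. if y \<in> ?T then ?c * QJ L m j (?G g) y else 0) \<in> Vsp ?T" by (simp add: Vsp_def)
  fix f :: "real^'d \<Rightarrow> complex"
  have "ip ?e ?S (Hop L m a mu0 j f) g = ?c * ip ?e ?S (QJs L m j f) (?G g)"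
    unfolding Hop_def ip_scale_left ip_Gop_swap[OF j] by simp
  also have "ip ?e ?S (QJs L m j f) (?G g) = ip 1 ?T f (QJ L m j (?G g))"
    by (metis cnj_ip ip_QJ_left[OF j(2)])
  also have "?c * \<dots> = ip 1 ?T f (\<lambda>y. if y \<in> ?T then ?c * QJ L m j (?G g) y else 0)"
    unfolding ip_scale_right[symmetric] by (rule ip_cong) auto
  finally show "ip ?e ?S (Hop L m a mu0 j f) g = ip 1 ?T f (\<lambda>y. if y \<in> ?T then ?c * QJ L m j (?G g) y else 0)" .
qed (simp_all add: finite_OmJj)

definition Bop :: "nat \<Rightarrow> (real^'d \<Rightarrow> complex) \<Rightarrow> real^'d \<Rightarrow> complex" where
  "Bop j \<psi> y = complex_of_real (aj a L j) * \<psi> y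
            - complex_of_real ((aj a L j)\<^sup>2) * QJ L m j (Gop L m a mu0 j (QJs L m j \<psi>)) y
            + complex_of_real (a / real L ^ 2) * Q1s L m j (Q1 L m j \<psi>) y"

lemma Cop_eq_opinv: "Cop L m a mu0 j = opinv (OmJj L m j) (Bop j)"
  unfolding Cop_def Bop_def[abs_def] ..

lemma linear_on_Vsp_Bop:
  assumes j: "1 \<le> j" "j < m"
  shows "linear_on_Vsp (OmJj L m j) (Bop j)"
proof -
  have "Bop j (\<lambda>z. u z + v z) y = Bop j u y + Bop j v y" for u v :: "real^'d \<Rightarrow> complex" and y
    using j by (simp add: Bop_def Q1s_eq Q1_add QJs_add Gop_add QJ_add algebra_simps add_divide_distrib)
  moreover have "Bop j (\<lambda>z. c * u z) y = c * Bop j u y" for c and u :: "real^'d \<Rightarrow> complex" and y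
    using j by (simp add: Bop_def Q1s_eq Q1_scale QJs_scale Gop_scale QJ_scale algebra_simps)
  ultimately show ?thesis unfolding linear_on_Vsp_def by blast
qed

subsection \<open>The one-step identity\<close>

text \<open>The operator defining \<open>G\<^sub>j\<^sub>+\<^sub>1\<close>, transported to the lattice \<open>\<Omega>\<^sup>(\<^sup>j\<^sup>)\<close> of the previous scale.\<close>

definition Aop_next :: "nat \<Rightarrow> (real^'d \<Rightarrow> complex) \<Rightarrow> real^'d \<Rightarrow> complex" where
  "Aop_next j \<phi> x = - nlap (1 / real L ^ j) (OmJ L m j) \<phi> x + complex_of_real (mubar mu0 L j) * \<phi> x
     + complex_of_real (aj a L (Suc j) / real L ^ 2) * QJs L m j (Q1s L m j (Q1 L m j (QJ L m j \<phi>))) x"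

lemma Aop_Suc_rescale:
  fixes \<phi> :: "real^'d \<Rightarrow> complex"
  assumes j: "Suc j \<le> m" and x: "x \<in> OmJ L m (Suc j)"
  shows "Aop (Suc j) (\<lambda>z. complex_of_real (1 / real L ^ 2) * \<phi> (real L *\<^sub>R z)) x = Aop_next j \<phi> (real L *\<^sub>R x)"
proof -
  have jm: "j < m" using j by simp
  let ?h = "\<lambda>z. \<phi> (real L *\<^sub>R z)"
  have "Aop (Suc j) (\<lambda>z. complex_of_real (1 / real L ^ 2) * ?h z) x =
      complex_of_real (1 / real L ^ 2) * Aop (Suc j) ?h x"
    using j by (rule Aop_scale)
  also have "Aop (Suc j) ?h x = - complex_of_real (real L ^ 2) * nlap (1 / real L ^ j) (OmJ L m j) \<phi> (real L *\<^sub>R x)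
      + complex_of_real (mubar mu0 L (Suc j)) * \<phi> (real L *\<^sub>R x)
      + complex_of_real (aj a L (Suc j)) * QJs L m j (Q1s L m j (Q1 L m j (QJ L m j \<phi>))) (real L *\<^sub>R x)"
    unfolding Aop_def nlap_rescale QJs_Q1s_Q1_QJ_rescale[OF jm x, symmetric] by simp
  also have "mubar mu0 L (Suc j) = real L ^ 2 * mubar mu0 L j"
    by (simp add: mubar_def power_add[symmetric] power2_eq_square)
  finally show ?thesis
    using L_pos by (simp add: Aop_next_def algebra_simps)
qed

lemma Gop_Suc_eqI:
  fixes \<phi> F :: "real^'d \<Rightarrow> complex"
  assumes j: "1 \<le> j" "Suc j \<le> m" and \<phi>: "\<phi> \<in> Vsp (OmJ L m j)"
    and eq: "\<And>X. X \<in> OmJ L m j \<Longrightarrow> Aop_next j \<phi> X = F X"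
  shows "Gop L m a mu0 (Suc j) (\<lambda>x. F (real L *\<^sub>R x)) = (\<lambda>x. complex_of_real (1 / real L ^ 2) * \<phi> (real L *\<^sub>R x))"
proof (rule Gop_eqI)
  show "1 \<le> Suc j" "Suc j \<le> m" using j by auto
  show "(\<lambda>x. complex_of_real (1 / real L ^ 2) * \<phi> (real L *\<^sub>R x)) \<in> Vsp (OmJ L m (Suc j))"
    using \<phi> OmJ_Suc_iff by (auto simp: Vsp_def)
  fix x :: "real^'d" assume x: "x \<in> OmJ L m (Suc j)"
  then show "Aop (Suc j) (\<lambda>x. complex_of_real (1 / real L ^ 2) * \<phi> (real L *\<^sub>R x)) x = F (real L *\<^sub>R x)"
    unfolding Aop_Suc_rescale[OF j(2) x] using eq OmJ_Suc_iff by blast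
qed

text \<open>The Schur-complement step. The hypothesis on \<open>\<psi>\<close> says \<open>\<psi> = C\<^sub>j H\<^sub>j\<^sup>* f\<close>; then
  \<open>G\<^sub>j f + C'\<^sub>j f = G\<^sub>j f + a\<^sub>j G\<^sub>j Q\<^sup>* \<psi>\<close> solves the equation of the next scale.\<close>

lemma QJ_Schur:
  fixes f \<psi> :: "real^'d \<Rightarrow> complex"
  assumes j: "1 \<le> j" "j < m" and y: "y \<in> OmJj L m j"
    and B: "Bop j \<psi> y = complex_of_real (aj a L j) * QJ L m j (Gop L m a mu0 j f) y"
  shows "QJ L m j (\<lambda>z. Gop L m a mu0 j f z + complex_of_real (aj a L j) * Gop L m a mu0 j (QJs L m j \<psi>) z) y
     = \<psi> y + complex_of_real (a / real L ^ 2 / aj a L j) * Q1s L m j (Q1 L m j \<psi>) y"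
proof -
  let ?c = "complex_of_real (aj a L j)" and ?B = "complex_of_real (a / real L ^ 2)"
  let ?X = "QJ L m j (Gop L m a mu0 j (QJs L m j \<psi>)) y" and ?P = "Q1s L m j (Q1 L m j \<psi>) y"
  have c: "?c \<noteq> 0" using aj_pos[OF a_pos L_gt_1 j(1)] by simp
  have "?c * \<psi> y - ?c\<^sup>2 * ?X + ?B * ?P = ?c * QJ L m j (Gop L m a mu0 j f) y"
    using B unfolding Bop_def by simp
  then have "?c * (QJ L m j (Gop L m a mu0 j f) y + ?c * ?X) = ?c * (\<psi> y + ?B / ?c * ?P)"
    using c by (simp add: algebra_simps power2_eq_square)
  then show ?thesis using c by (simp add: QJ_add QJ_scale)
qed

lemma Aop_next_Schur:
  fixes f \<psi> :: "real^'d \<Rightarrow> complex"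
  assumes j: "1 \<le> j" "j < m" and x: "x \<in> OmJ L m j"
    and B: "\<And>y. y \<in> OmJj L m j \<Longrightarrow> Bop j \<psi> y = complex_of_real (aj a L j) * QJ L m j (Gop L m a mu0 j f) y"
  shows "Aop_next j (\<lambda>z. Gop L m a mu0 j f z + complex_of_real (aj a L j) * Gop L m a mu0 j (QJs L m j \<psi>) z) x = f x"
proof -
  let ?G = "Gop L m a mu0 j" and ?c = "complex_of_real (aj a L j)"
  let ?\<phi> = "\<lambda>z. ?G f z + ?c * ?G (QJs L m j \<psi>) z"
  let ?t = "a / real L ^ 2 / aj a L j"
  let ?y = "vec_floor x"
  have jm: "j \<le> m" using j by simp
  have y: "?y \<in> OmJj L m j" using vec_floor_in_OmJj[OF x jm] .
  have Y: "block_corner L ?y \<in> OmJj1 L m j" using block_corner_in_OmJj1[OF y j(2)] .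
  have QJ\<phi>: "QJ L m j ?\<phi> y' = \<psi> y' + complex_of_real ?t * Q1s L m j (Q1 L m j \<psi>) y'"
    if "y' \<in> OmJj L m j" for y'
    using QJ_Schur[OF j that B[OF that]] .
  have "Aop j ?\<phi> x = f x + ?c * QJs L m j \<psi> x"
    using Aop_Gop[OF j(1) jm x] by (simp add: Aop_add[OF jm] Aop_scale[OF jm])
  then have "- nlap (1 / real L ^ j) (OmJ L m j) ?\<phi> x + complex_of_real (mubar mu0 L j) * ?\<phi> x
      = f x + ?c * \<psi> ?y - ?c * QJ L m j ?\<phi> ?y"
    using x y by (simp add: Aop_def QJs_eq[OF jm] algebra_simps)
  also have "\<dots> = f x - ?c * complex_of_real ?t * Q1 L m j \<psi> (block_corner L ?y)"
    using y by (simp add: QJ\<phi> Q1s_eq[OF j(2)] algebra_simps)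
  finally have lower: "- nlap (1 / real L ^ j) (OmJ L m j) ?\<phi> x + complex_of_real (mubar mu0 L j) * ?\<phi> x
      = f x - complex_of_real (a / real L ^ 2) * Q1 L m j \<psi> (block_corner L ?y)"
    using aj_pos[OF a_pos L_gt_1 j(1)] by simp
  have "Q1 L m j (QJ L m j ?\<phi>) (block_corner L ?y) =
      Q1 L m j (\<lambda>y'. \<psi> y' + complex_of_real ?t * Q1s L m j (Q1 L m j \<psi>) y') (block_corner L ?y)"
    using QJ\<phi> by (rule Q1_cong)
  also have "\<dots> = complex_of_real (1 + ?t) * Q1 L m j \<psi> (block_corner L ?y)"
    unfolding Q1_add Q1_scale Q1_Q1s[OF Y j(2)] by (simp add: algebra_simps)
  finally have Q1QJ\<phi>: "Q1 L m j (QJ L m j ?\<phi>) (block_corner L ?y) = complex_of_real (1 + ?t) * Q1 L m j \<psi> (block_corner L ?y)" .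
  have top: "QJs L m j (Q1s L m j (Q1 L m j (QJ L m j ?\<phi>))) x = Q1 L m j (QJ L m j ?\<phi>) (block_corner L ?y)"
    using x y by (simp add: QJs_eq[OF jm] Q1s_eq[OF j(2)])
  have "aj a L (Suc j) / real L ^ 2 * (1 + ?t) = a / real L ^ 2"
    by (rule aj_Suc_coeff[OF a_pos L_gt_1 j(1)])
  then have coef: "complex_of_real (aj a L (Suc j) / real L ^ 2) * complex_of_real (1 + ?t) = complex_of_real (a / real L ^ 2)"
    by (simp only: of_real_mult[symmetric])
  show ?thesis
    unfolding Aop_next_def lower top Q1QJ\<phi> mult.assoc[symmetric] coef by simp
qed

lemma Gop_zero:
  assumes "1 \<le> j" "j \<le> m"
  shows "Gop L m a mu0 j (\<lambda>_. 0) = (\<lambda>_. 0)"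
  using Gop_scale[OF assms, of 0 "\<lambda>_. 0"] by simp

lemma inj_on_Vsp_Bop:
  assumes j: "1 \<le> j" "Suc j \<le> m"
  shows "inj_on_Vsp (OmJj L m j) (Bop j)"
  unfolding inj_on_Vsp_def
proof (intro ballI impI)
  fix \<psi> :: "real^'d \<Rightarrow> complex"
  assume \<psi>: "\<psi> \<in> Vsp (OmJj L m j)" and B0: "\<forall>y\<in>OmJj L m j. Bop j \<psi> y = 0"
  have jm: "j < m" "j \<le> m" using j by auto
  let ?G = "Gop L m a mu0 j" and ?c = "complex_of_real (aj a L j)"
  define \<phi> where "\<phi> = (\<lambda>z. ?G (\<lambda>_. 0) z + ?c * ?G (QJs L m j \<psi>) z)"
  have B: "Bop j \<psi> y = ?c * QJ L m j (?G (\<lambda>_. 0)) y" if "y \<in> OmJj L m j" for y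
    using B0 that by (simp add: Gop_zero[OF j(1) jm(2)] QJ_eq)
  have \<phi>V: "\<phi> \<in> Vsp (OmJ L m j)" by (simp add: \<phi>_def Vsp_def Gop_outside[OF j(1) jm(2)])
  have "Gop L m a mu0 (Suc j) (\<lambda>x. 0) = (\<lambda>x. complex_of_real (1 / real L ^ 2) * \<phi> (real L *\<^sub>R x))"
    using Gop_Suc_eqI[OF j \<phi>V, of "\<lambda>_. 0"] Aop_next_Schur[OF j(1) jm(1) _ B] by (simp add: \<phi>_def)
  then have "(\<lambda>x. complex_of_real (1 / real L ^ 2) * \<phi> (real L *\<^sub>R x)) = (\<lambda>_. 0)"
    unfolding Gop_zero[OF le_SucI[OF j(1)] j(2)] by simp
  then have "\<phi> X = 0" for X
    using fun_cong[of _ _ "inverse (real L) *\<^sub>R X"] L_pos by fastforce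
  then have "\<psi> y + complex_of_real (a / real L ^ 2 / aj a L j) * Q1s L m j (Q1 L m j \<psi>) y = 0"
    if "y \<in> OmJj L m j" for y
    using QJ_Schur[OF j(1) jm(1) that B[OF that]] by (simp add: \<phi>_def[symmetric] QJ_eq[OF that])
  moreover have "a / real L ^ 2 / aj a L j > 0" using a_pos aj_pos[OF a_pos L_gt_1 j(1)] L_pos by simp
  ultimately show "\<psi> = (\<lambda>_. 0)" using id_plus_Q1s_Q1_inj[OF jm(1) _ \<psi>] by blast
qed

lemma Cop_solves:
  assumes j: "1 \<le> j" "Suc j \<le> m"
  shows "y \<in> OmJj L m j \<Longrightarrow> Bop j (Cop L m a mu0 j g) y = g y"
  unfolding Cop_eq_opinv using j
  by (intro opinv_solves(2)[OF finite_OmJj linear_on_Vsp_Bop inj_on_Vsp_Bop[OF j]]) auto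

lemma Gop_Suc:
  fixes f :: "real^'d \<Rightarrow> complex"
  assumes j: "1 \<le> j" "Suc j \<le> m"
  shows "Gop L m a mu0 (Suc j) f = (\<lambda>x. complex_of_real (1 / real L ^ 2) *
     (Gop L m a mu0 j (rescale (real L) f) (real L *\<^sub>R x) + Cp L m a mu0 j (rescale (real L) f) (real L *\<^sub>R x)))"
proof -
  have jm: "j < m" "j \<le> m" using j by auto
  define F where "F = rescale (real L) f"
  define \<psi> where "\<psi> = Cop L m a mu0 j (Hs L m a mu0 j F)"
  define \<phi> where "\<phi> = (\<lambda>z. Gop L m a mu0 j F z + complex_of_real (aj a L j) * Gop L m a mu0 j (QJs L m j \<psi>) z)"
  have B: "Bop j \<psi> y = complex_of_real (aj a L j) * QJ L m j (Gop L m a mu0 j F) y" if "y \<in> OmJj L m j" for y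
    using Cop_solves[OF j that, where g="Hs L m a mu0 j F"] that by (simp add: \<psi>_def Hs_eq[OF j(1) jm(2)])
  have \<phi>V: "\<phi> \<in> Vsp (OmJ L m j)" by (simp add: \<phi>_def Vsp_def Gop_outside[OF j(1) jm(2)])
  have "Gop L m a mu0 (Suc j) (\<lambda>x. F (real L *\<^sub>R x)) = (\<lambda>x. complex_of_real (1 / real L ^ 2) * \<phi> (real L *\<^sub>R x))"
    using Gop_Suc_eqI[OF j \<phi>V] Aop_next_Schur[OF j(1) jm(1) _ B] by (simp add: \<phi>_def)
  moreover have "(\<lambda>x. F (real L *\<^sub>R x)) = f" using L_pos by (simp add: F_def rescale_def)
  moreover have "\<phi> = (\<lambda>z. Gop L m a mu0 j F z + Cp L m a mu0 j F z)"
    by (simp add: \<phi>_def Cp_def Hop_def \<psi>_def)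
  ultimately show ?thesis by (simp add: F_def)
qed

lemma Gop_decomposition:
  fixes f :: "real^'d \<Rightarrow> complex"
  assumes "1 \<le> k" "k \<le> m" and "x \<in> OmJ L m k"
  shows "Gop L m a mu0 k f x =
     (\<Sum>j\<in>{1..k-1}. complex_of_real (1 / (real L ^ (k - j))\<^sup>2) *
        Cp L m a mu0 j (rescale (real L ^ (k - j)) f) (real L ^ (k - j) *\<^sub>R x))
     + complex_of_real (1 / (real L ^ (k - 1))\<^sup>2) *
        Gop L m a mu0 1 (rescale (real L ^ (k - 1)) f) (real L ^ (k - 1) *\<^sub>R x)"
  using assms
proof (induction k arbitrary: f x rule: nat_induct_at_least)
  case base
  then show ?case by (simp add: rescale_1)
next
  case (Suc k)
  let ?F = "rescale (real L) f" and ?c = "complex_of_real (1 / real L ^ 2)"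
  have L0: "L > 0" using L_gt_1 by simp
  have IH: "Gop L m a mu0 k ?F (real L *\<^sub>R x) =
     (\<Sum>j\<in>{1..k-1}. complex_of_real (1 / (real L ^ (k - j))\<^sup>2) *
        Cp L m a mu0 j (rescale (real L ^ (k - j)) ?F) (real L ^ (k - j) *\<^sub>R (real L *\<^sub>R x)))
     + complex_of_real (1 / (real L ^ (k - 1))\<^sup>2) *
        Gop L m a mu0 1 (rescale (real L ^ (k - 1)) ?F) (real L ^ (k - 1) *\<^sub>R (real L *\<^sub>R x))"
    using Suc.prems OmJ_Suc_iff by (intro Suc.IH) auto
  have "?c * (\<Sum>j\<in>{1..k-1}. complex_of_real (1 / (real L ^ (k - j))\<^sup>2) *
        Cp L m a mu0 j (rescale (real L ^ (k - j)) ?F) (real L ^ (k - j) *\<^sub>R (real L *\<^sub>R x))) =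
     (\<Sum>j\<in>{1..k-1}. complex_of_real (1 / (real L ^ (Suc k - j))\<^sup>2) *
        Cp L m a mu0 j (rescale (real L ^ (Suc k - j)) f) (real L ^ (Suc k - j) *\<^sub>R x))"
    unfolding sum_distrib_left
    by (intro sum.cong refl scaled_term_Suc[OF L0, where T="Cp L m a mu0 _"]) auto
  moreover have "?c * (complex_of_real (1 / (real L ^ (k - 1))\<^sup>2) *
        Gop L m a mu0 1 (rescale (real L ^ (k - 1)) ?F) (real L ^ (k - 1) *\<^sub>R (real L *\<^sub>R x))) =
     complex_of_real (1 / (real L ^ (Suc k - 1))\<^sup>2) *
        Gop L m a mu0 1 (rescale (real L ^ (Suc k - 1)) f) (real L ^ (Suc k - 1) *\<^sub>R x)"
    using Suc.hyps by (intro scaled_term_Suc[OF L0]) auto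
  moreover have "?c * Cp L m a mu0 k ?F (real L *\<^sub>R x) = complex_of_real (1 / (real L ^ (Suc k - k))\<^sup>2) *
        Cp L m a mu0 k (rescale (real L ^ (Suc k - k)) f) (real L ^ (Suc k - k) *\<^sub>R x)"
    by simp
  moreover have "(\<Sum>j\<in>{1..Suc k - 1}. T j) = T k + (\<Sum>j\<in>{1..k-1}. T j)" for T :: "nat \<Rightarrow> complex"
  proof -
    have "{1..Suc k - 1} = insert k {1..k-1}" using Suc.hyps by auto
    then show ?thesis using Suc.hyps by auto
  qed
  moreover have "Gop L m a mu0 (Suc k) f x = ?c * Gop L m a mu0 k ?F (real L *\<^sub>R x) + ?c * Cp L m a mu0 k ?F (real L *\<^sub>R x)"
    using Gop_Suc[OF Suc.hyps Suc.prems(1), of f] by (simp only: distrib_left)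
  ultimately show ?case
    unfolding IH distrib_left by (simp only: add_ac)
qed

end

theorem mainTheorem9:
  fixes L k m :: nat and a mu0 :: real
    and f :: "real^'d \<Rightarrow> complex" and x :: "real^'d"
  assumes "odd L" and "L > 1" and "k \<ge> 1" and "m \<ge> k"
    and "0 < a" and "a \<le> 1" and "mu0 \<ge> 0"
    and "x \<in> lat (1 / real L ^ k) (L ^ m)"
  shows "Gop L m a mu0 k f x =
     (\<Sum>j\<in>{1..k-1}. complex_of_real (1 / (real L ^ (k - j))^2) *
        Cp L m a mu0 j (rescale (real L ^ (k - j)) f) (real L ^ (k - j) *\<^sub>R x))
     + complex_of_real (1 / (real L ^ (k - 1))^2) *
        Gop L m a mu0 1 (rescale (real L ^ (k - 1)) f) (real L ^ (k - 1) *\<^sub>R x)"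
proof -
  interpret rg_model L m a mu0 by unfold_locales (use assms in auto)
  have xS: "x \<in> OmJ L m k" unfolding OmJ_def using assms(8) .
  show ?thesis by (rule Gop_decomposition) (use assms xS in auto)
qed

end
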